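(* Let $G$ be a group with a non-elementary action by isometries on a geodesic $\delta$-hyperbolic space $X$, and let $o\in X$ be a base point. For any $0<\epsilon<1$ there exists $C$ such that for any $D$ there is a finite set $S\subseteq G$ of loxodromic elements which is $(\epsilon,C,D)$-Schottky and moreover: (1) the sets $V_C(s^+)$ for distinct $s\in S$ are pairwise disjoint; (2) $so\in V_{C+\delta}(s^+)$ for each $s\in S$.
   Context: Gromov product $(x,y)_z=\frac12(d(x,z)+d(y,z)-d(x,y))$, extended to a boundary point $\xi\in\partial X$ in the standard way via sequences converging to $\xi$. An element $g$ is loxodromic if $\lim_n d(g^no,o)/n>0$; then $g^+\in\partial X$ denotes its attracting fixed point, and $V_C(g^+)=\{x\in X:(x,g^+)_o\ge C\}$. The action is non-elementary if $G$ contains two loxodromic elements with disjoint fixed sets in $\partial X$. A finite set $S$ is $(\epsilon,C,D)$-Schottky if for all $x,y\in X$, $\#\{s\in S:(x,sy)_o\le C\}\ge(1-\epsilon)\#S$ and $\#\{s\in S:(x,s^{-1}y)_o\le C\}\ge(1-\epsilon)\#S$, and $d(o,so)\ge D$ for all $s\in S$. *)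

theory Defs
  imports "HOL-Analysis.Analysis" "HOL-Algebra.Group"
begin

definition gromov_prod :: "'a::metric_space \<Rightarrow> 'a \<Rightarrow> 'a \<Rightarrow> real" where
  "gromov_prod x y z = (dist x z + dist y z - dist x y) / 2"

text \<open>Geodesic metric space (the whole type is the space X).\<close>
definition geodesic_space :: "'a::metric_space itself \<Rightarrow> bool" where
  "geodesic_space _ \<longleftrightarrow> (\<forall>x y::'a. \<exists>\<gamma>::real \<Rightarrow> 'a. \<gamma> 0 = x \<and> \<gamma> (dist x y) = y \<and>
      (\<forall>s\<in>{0..dist x y}. \<forall>t\<in>{0..dist x y}. dist (\<gamma> s) (\<gamma> t) = \<bar>s - t\<bar>))"

definition gromov_hyperbolic :: "'a::metric_space itself \<Rightarrow> real \<Rightarrow> bool" where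
  "gromov_hyperbolic _ \<delta> \<longleftrightarrow> \<delta> \<ge> 0 \<and> (\<forall>x y z w::'a.
      gromov_prod x z w \<ge> min (gromov_prod x y w) (gromov_prod y z w) - \<delta>)"

definition isometric_action :: "('g, 'b) monoid_scheme \<Rightarrow> ('g \<Rightarrow> 'a::metric_space \<Rightarrow> 'a) \<Rightarrow> bool" where
  "isometric_action G \<phi> \<longleftrightarrow> group G \<and> \<phi> \<one>\<^bsub>G\<^esub> = id \<and>
     (\<forall>g\<in>carrier G. \<forall>h\<in>carrier G. \<phi> (g \<otimes>\<^bsub>G\<^esub> h) = \<phi> g \<circ> \<phi> h) \<and>
     (\<forall>g\<in>carrier G. \<forall>x y. dist (\<phi> g x) (\<phi> g y) = dist x y)"

definition gromov_seq :: "'a::metric_space \<Rightarrow> (nat \<Rightarrow> 'a) \<Rightarrow> bool" where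
  "gromov_seq p u \<longleftrightarrow> (\<forall>M. \<exists>N. \<forall>m\<ge>N. \<forall>n\<ge>N. gromov_prod (u m) (u n) p \<ge> M)"

definition seq_equiv :: "'a::metric_space \<Rightarrow> (nat \<Rightarrow> 'a) \<Rightarrow> (nat \<Rightarrow> 'a) \<Rightarrow> bool" where
  "seq_equiv p u v \<longleftrightarrow> (\<forall>M. \<exists>N. \<forall>m\<ge>N. \<forall>n\<ge>N. gromov_prod (u m) (v n) p \<ge> M)"

definition bd_class :: "'a::metric_space \<Rightarrow> (nat \<Rightarrow> 'a) \<Rightarrow> (nat \<Rightarrow> 'a) set" where
  "bd_class p u = {v. gromov_seq p v \<and> seq_equiv p u v}"

definition gromov_boundary :: "'a::metric_space \<Rightarrow> (nat \<Rightarrow> 'a) set set" where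
  "gromov_boundary p = {bd_class p u | u. gromov_seq p u}"

definition gromov_prod_bd :: "'a::metric_space \<Rightarrow> (nat \<Rightarrow> 'a) set \<Rightarrow> 'a \<Rightarrow> ereal" where
  "gromov_prod_bd x \<xi> p = (SUP u\<in>\<xi>. liminf (\<lambda>n. ereal (gromov_prod x (u n) p)))"

definition V_set :: "'a::metric_space \<Rightarrow> real \<Rightarrow> (nat \<Rightarrow> 'a) set \<Rightarrow> 'a set" where
  "V_set p C \<xi> = {x. gromov_prod_bd x \<xi> p \<ge> ereal C}"

definition bd_act :: "('g \<Rightarrow> 'a \<Rightarrow> 'a) \<Rightarrow> 'g \<Rightarrow> (nat \<Rightarrow> 'a) set \<Rightarrow> (nat \<Rightarrow> 'a) set" where
  "bd_act \<phi> g \<xi> = {(\<lambda>n. \<phi> g (u n)) | u. u \<in> \<xi>}"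

definition bd_fixed_set :: "('g \<Rightarrow> 'a::metric_space \<Rightarrow> 'a) \<Rightarrow> 'a \<Rightarrow> 'g \<Rightarrow> (nat \<Rightarrow> 'a) set set" where
  "bd_fixed_set \<phi> p g = {\<xi> \<in> gromov_boundary p. bd_act \<phi> g \<xi> = \<xi>}"

definition loxodromic :: "('g, 'b) monoid_scheme \<Rightarrow> ('g \<Rightarrow> 'a::metric_space \<Rightarrow> 'a) \<Rightarrow> 'a \<Rightarrow> 'g \<Rightarrow> bool" where
  "loxodromic G \<phi> p g \<longleftrightarrow> g \<in> carrier G \<and>
     (\<exists>L>0. (\<lambda>n. dist (\<phi> (g [^]\<^bsub>G\<^esub> n) p) p / real n) \<longlonglongrightarrow> L)"

definition attr_fix :: "('g, 'b) monoid_scheme \<Rightarrow> ('g \<Rightarrow> 'a::metric_space \<Rightarrow> 'a) \<Rightarrow> 'a \<Rightarrow> 'g \<Rightarrow> (nat \<Rightarrow> 'a) set" where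
  "attr_fix G \<phi> p g = bd_class p (\<lambda>n. \<phi> (g [^]\<^bsub>G\<^esub> n) p)"

definition non_elementary :: "('g, 'b) monoid_scheme \<Rightarrow> ('g \<Rightarrow> 'a::metric_space \<Rightarrow> 'a) \<Rightarrow> 'a \<Rightarrow> bool" where
  "non_elementary G \<phi> p \<longleftrightarrow> (\<exists>g\<in>carrier G. \<exists>h\<in>carrier G. loxodromic G \<phi> p g \<and> loxodromic G \<phi> p h \<and>
      bd_fixed_set \<phi> p g \<inter> bd_fixed_set \<phi> p h = {})"

definition schottky :: "('g, 'b) monoid_scheme \<Rightarrow> ('g \<Rightarrow> 'a::metric_space \<Rightarrow> 'a) \<Rightarrow> 'a \<Rightarrow> real \<Rightarrow> real \<Rightarrow> real \<Rightarrow> 'g set \<Rightarrow> bool" where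
  "schottky G \<phi> p \<epsilon> C D S \<longleftrightarrow> finite S \<and> S \<subseteq> carrier G \<and>
     (\<forall>x y. real (card {s\<in>S. gromov_prod x (\<phi> s y) p \<le> C}) \<ge> (1 - \<epsilon>) * real (card S) \<and>
            real (card {s\<in>S. gromov_prod x (\<phi> (inv\<^bsub>G\<^esub> s) y) p \<le> C}) \<ge> (1 - \<epsilon>) * real (card S)) \<and>
     (\<forall>s\<in>S. dist p (\<phi> s p) \<ge> D)"

end

theory Submission
  imports Defs
begin

(* A sequence of points with steps of length at least A whose
   Gromov products at the intermediate vertices are at most B, where A > 2B + 3 delta, is a
   quasi-geodesic. Hence the orbit of the base point along a reduced word over an alphabet (a
   symmetric set of elements with long translations and small mutual Gromov products) is a
   quasi-geodesic, and two reduced words with a common prefix w have orbit points whose Gromov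
   product is controlled by the length of w.
   Non-elementarity gives two loxodromic elements with disjoint fixed sets; their rays have bounded
   Gromov products, so suitable powers a, b make {a, a^-1, b, b^-1} an alphabet. The elements
   s_i = (a^i b)^n, 1 <= i <= N, then have mutual Gromov products (also for the inverses) bounded in
   terms of N only, while d(o, s_i o) grows linearly in n. By the four-point condition at most two
   s in S satisfy (x, s y)_o > C, which gives the Schottky property once N >= 2/epsilon, and the
   same estimates separate the shadows V_C(s^+). *)

abbreviation gp :: "'a::metric_space \<Rightarrow> 'a \<Rightarrow> 'a \<Rightarrow> real" where
  "gp \<equiv> gromov_prod"

lemma gromov_prod_commute: "gp x y z = gp y x z"
  unfolding gromov_prod_def by (simp add: dist_commute)

lemma gromov_prod_nonneg: "gp x y z \<ge> 0"
  unfolding gromov_prod_def using dist_triangle[of x y z] by (simp add: dist_commute)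

lemma gromov_prod_le_dist: "gp x y z \<le> dist x z"
  unfolding gromov_prod_def using dist_triangle[of y z x] by (simp add: dist_commute)

lemma gromov_prod_base_self: "gp x y x = 0"
  unfolding gromov_prod_def by (simp add: dist_commute)

lemma gromov_prod_self: "gp x x z = dist x z"
  unfolding gromov_prod_def by simp

lemma gromov_prod_add_swap_base: "gp y z w + gp y w z = dist w z"
  unfolding gromov_prod_def by (simp add: dist_commute field_simps)

lemma dist_eq_gromov_prod: "dist x z = dist x y + dist y z - 2 * gp x z y"
  unfolding gromov_prod_def by (simp add: dist_commute field_simps)

lemma gromov_prod_base_change: "gp x y q \<ge> gp x y z - dist z q"
  unfolding gromov_prod_def using dist_triangle[of x z q] dist_triangle[of y z q]
  by (simp add: dist_commute field_simps)

lemma gromov_prod_lipschitz: "gp x z w \<ge> gp y z w - dist x y"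
  unfolding gromov_prod_def using dist_triangle[of y w x] dist_triangle[of x z y]
  by (simp add: dist_commute field_simps)

lemma quasi_additive_ratio_bound:
  fixes f :: "nat \<Rightarrow> real"
  assumes sub: "\<And>k m. f (k + m) \<le> f k + f m"
    and super: "\<And>k m. f (k + m) \<ge> f k + f m - c"
    and k: "k \<ge> 1" and m: "m \<ge> 1"
  shows "\<bar>f (k * m) / real (k * m) - f k / real k\<bar> \<le> c / real k"
proof -
  have up: "f (k * Suc j) \<le> real (Suc j) * f k" for j
  proof (induction j)
    case (Suc j)
    have "f (k * Suc (Suc j)) \<le> f (k * Suc j) + f k"
      using sub[of "k * Suc j" k] by (simp add: algebra_simps)
    then show ?case using Suc by (simp add: algebra_simps)
  qed simp
  have down: "f (k * Suc j) \<ge> real (Suc j) * f k - real j * c" for j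
  proof (induction j)
    case (Suc j)
    have "f (k * Suc (Suc j)) \<ge> f (k * Suc j) + f k - c"
      using super[of "k * Suc j" k] by (simp add: algebra_simps)
    then show ?case using Suc by (simp add: algebra_simps)
  qed simp
  have c0: "c \<ge> 0" using sub[of 0 0] super[of 0 0] by simp
  obtain j where j: "m = Suc j" using m by (cases m) auto
  have u: "f (k * m) \<le> real m * f k" and d: "f (k * m) \<ge> real m * f k - real m * c"
    using up[of j] down[of j] c0 j by (auto simp: algebra_simps intro: order_trans)
  have km: "real k * real m > 0" using k m by auto
  have "f (k * m) / (real k * real m) \<le> real m * f k / (real k * real m)"
    by (rule divide_right_mono) (use u km in auto)
  moreover have "f (k * m) / (real k * real m) \<ge> (real m * f k - real m * c) / (real k * real m)"
    by (rule divide_right_mono) (use d km in auto)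
  moreover have "real m * f k / (real k * real m) = f k / real k"
    "(real m * f k - real m * c) / (real k * real m) = f k / real k - c / real k"
    using k m by (auto simp: field_simps)
  ultimately show ?thesis by (simp add: abs_le_iff)
qed

lemma quasi_additive_linear_rate:
  fixes f :: "nat \<Rightarrow> real"
  assumes sub: "\<And>k m. f (k + m) \<le> f k + f m"
    and super: "\<And>k m. f (k + m) \<ge> f k + f m - c"
    and lower: "\<And>k. f k \<ge> real k * \<gamma>" and \<gamma>: "\<gamma> > 0"
  shows "\<exists>L>0. (\<lambda>k. f k / real k) \<longlonglongrightarrow> L"
proof -
  define a where "a k = f k / real k" for k
  note ratio = quasi_additive_ratio_bound[OF sub super, folded a_def]
  have c0: "c \<ge> 0" using sub[of 0 0] super[of 0 0] by simp
  have "Cauchy a"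
  proof (rule CauchyI)
    fix e :: real assume e: "0 < e"
    obtain M :: nat where M: "2 * c < real M * e" using ex_less_of_nat_mult[OF e] by blast
    then have M0: "real M > 0" using c0 by (cases "M = 0") auto
    show "\<exists>M. \<forall>m\<ge>M. \<forall>n\<ge>M. norm (a m - a n) < e"
    proof (intro exI allI impI)
      fix m n assume mn: "M \<le> m" "M \<le> n"
      have m1: "m \<ge> 1" "n \<ge> 1" using mn M0 by auto
      have "\<bar>a (m * n) - a m\<bar> \<le> c / real m" using ratio[OF m1] .
      moreover have "\<bar>a (m * n) - a n\<bar> \<le> c / real n"
        using ratio[OF m1(2,1)] by (simp add: mult.commute)
      moreover have "c / real m \<le> c / real M" "c / real n \<le> c / real M"
        using mn c0 M0 by (simp_all add: frac_le)
      moreover have "c / real M + c / real M < e" using M M0 by (simp add: field_simps)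
      ultimately show "norm (a m - a n) < e" by simp
    qed
  qed
  then have lim: "a \<longlonglongrightarrow> lim a" by (simp add: Cauchy_convergent_iff convergent_LIMSEQ_iff)
  have "\<forall>n\<ge>1. \<gamma> \<le> a n" using lower by (simp add: a_def field_simps)
  then have "\<gamma> \<le> lim a" by (intro LIMSEQ_le_const[OF lim]) auto
  then have "lim a > 0" using \<gamma> by linarith
  with lim show ?thesis unfolding a_def by blast
qed

lemma gromov_seq_of_linear_prefix_bound:
  assumes prefix: "\<And>k k'. k \<le> k' \<Longrightarrow> gp (u k) (u k') p \<ge> dist p (u k) - c"
    and lower: "\<And>k. dist p (u k) \<ge> real k * \<gamma>" and \<gamma>: "\<gamma> > 0"
  shows "gromov_seq p u"
  unfolding gromov_seq_def
proof
  fix M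
  obtain N :: nat where "M + c < real N * \<gamma>" using ex_less_of_nat_mult[OF \<gamma>] by blast
  moreover have "real N * \<gamma> \<le> real k * \<gamma>" if "N \<le> k" for k using that \<gamma> by (intro mult_right_mono) auto
  ultimately have far: "M + c \<le> dist p (u k)" if "N \<le> k" for k using lower[of k] that by force
  show "\<exists>N. \<forall>m\<ge>N. \<forall>n\<ge>N. M \<le> gp (u m) (u n) p"
  proof (intro exI allI impI)
    fix m n assume "N \<le> m" "N \<le> n"
    then show "M \<le> gp (u m) (u n) p"
      using prefix[of m n] prefix[of n m] far[of m] far[of n] gromov_prod_commute[of "u m" "u n" p]
      by (cases "m \<le> n") auto
  qed
qed

lemma finite_uniform_upper_bound:
  fixes f :: "'s \<Rightarrow> 'k \<Rightarrow> real"
  assumes "finite S" and "\<forall>s\<in>S. \<exists>M. \<forall>k. f s k \<le> M"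
  shows "\<exists>M. \<forall>s\<in>S. \<forall>k. f s k \<le> M"
  using assms
proof (induction S rule: finite_induct)
  case (insert s S)
  then obtain M M' where "\<forall>k. f s k \<le> M" "\<forall>s\<in>S. \<forall>k. f s k \<le> M'" by auto
  then show ?case by (intro exI[of _ "max M M'"]) (auto intro: le_max_iff_disj[THEN iffD2])
qed simp

lemma set_concat_replicate: "set (concat (replicate n W)) = (if n = 0 then {} else set W)"
  by (induction n) auto

section \<open>Hyperbolic actions\<close>

locale hyperbolic_action = group G for G :: "('g, 'b) monoid_scheme" (structure) +
  fixes \<phi> :: "'g \<Rightarrow> 'a::metric_space \<Rightarrow> 'a" and p :: 'a and \<delta> :: real
  assumes hyperbolic: "gromov_hyperbolic TYPE('a) \<delta>"
    and action: "isometric_action G \<phi>"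
begin

lemma delta_nonneg: "\<delta> \<ge> 0"
  using hyperbolic unfolding gromov_hyperbolic_def by auto

lemma four_point: "gp (x::'a) z w \<ge> min (gp x y w) (gp y z w) - \<delta>"
  using hyperbolic unfolding gromov_hyperbolic_def by blast

lemma four_point_twice: "gp (x::'a) z w \<ge> min (gp x y w) (min (gp y y' w) (gp y' z w)) - 2 * \<delta>"
  using four_point[of x y w z] four_point[of y y' w z] delta_nonneg by linarith

lemma act_one [simp]: "\<phi> \<one> x = x"
  using action unfolding isometric_action_def by simp

lemma act_mult: "g \<in> carrier G \<Longrightarrow> h \<in> carrier G \<Longrightarrow> \<phi> (g \<otimes> h) x = \<phi> g (\<phi> h x)"
  using action unfolding isometric_action_def by simp

lemma act_dist [simp]: "g \<in> carrier G \<Longrightarrow> dist (\<phi> g x) (\<phi> g y) = dist x y"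
  using action unfolding isometric_action_def by simp

lemma act_inv_cancel_left [simp]: "g \<in> carrier G \<Longrightarrow> \<phi> (inv g) (\<phi> g x) = x"
  by (metis inv_closed l_inv act_mult act_one)

lemma act_inv_cancel_right [simp]: "g \<in> carrier G \<Longrightarrow> \<phi> g (\<phi> (inv g) x) = x"
  by (metis inv_closed r_inv act_mult act_one)

lemma gromov_prod_act [simp]: "g \<in> carrier G \<Longrightarrow> gp (\<phi> g x) (\<phi> g y) (\<phi> g z) = gp x y z"
  unfolding gromov_prod_def by simp

lemma dist_act_inv: "g \<in> carrier G \<Longrightarrow> dist p (\<phi> (inv g) p) = dist p (\<phi> g p)"
  by (metis dist_commute act_inv_cancel_right act_dist inv_closed)

lemma m_commute_inv:
  assumes g: "g \<in> carrier G" and x: "x \<in> carrier G" and c: "g \<otimes> x = x \<otimes> g"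
  shows "g \<otimes> inv x = inv x \<otimes> g"
proof -
  have "inv x \<otimes> g = inv x \<otimes> (g \<otimes> x) \<otimes> inv x" using g x by (simp add: m_assoc)
  also have "\<dots> = g \<otimes> inv x" using g x by (simp add: c m_assoc[symmetric])
  finally show ?thesis by simp
qed

lemma dist_act_commuting:
  assumes g: "g \<in> carrier G" and z: "z \<in> carrier G" and c: "g \<otimes> z = z \<otimes> g"
  shows "dist (\<phi> g (\<phi> z p)) (\<phi> z p) = dist (\<phi> g p) p"
proof -
  have "\<phi> g (\<phi> z p) = \<phi> z (\<phi> g p)" using g z c by (metis act_mult)
  then show ?thesis using z by simp
qed

section \<open>Chains and reduced words\<close>

text \<open>The local-to-global principle: if \<open>A > 2B + 3\<delta>\<close>, a chain is a quasi-geodesic.\<close>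

definition chain :: "(nat \<Rightarrow> 'a) \<Rightarrow> nat \<Rightarrow> real \<Rightarrow> real \<Rightarrow> bool" where
  "chain x n A B \<longleftrightarrow> (\<forall>k<n. dist (x k) (x (Suc k)) \<ge> A) \<and>
     (\<forall>k. 0 < k \<and> k < n \<longrightarrow> gp (x (k - 1)) (x (Suc k)) (x k) \<le> B)"

lemma chain_prefix: "chain x n A B \<Longrightarrow> m \<le> n \<Longrightarrow> chain x m A B"
  unfolding chain_def by auto

lemma chain_reverse:
  assumes "chain x n A B"
  shows "chain (\<lambda>j. x (n - j)) n A B"
  unfolding chain_def
proof safe
  fix k assume "k < n"
  then have "A \<le> dist (x (n - Suc k)) (x (Suc (n - Suc k)))" "Suc (n - Suc k) = n - k"
    using assms unfolding chain_def by auto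
  then show "A \<le> dist (x (n - k)) (x (n - Suc k))" by (simp add: dist_commute)
next
  fix k assume k: "0 < k" "k < n"
  define j where "j = n - k"
  have "0 < j" "j < n" "n - (k - 1) = Suc j" "n - Suc k = j - 1" using k unfolding j_def by auto
  then show "gp (x (n - (k - 1))) (x (n - Suc k)) (x (n - k)) \<le> B"
    using assms unfolding chain_def j_def[symmetric] by (simp add: gromov_prod_commute)
qed

lemma chain_gp_start:
  assumes c: "chain x n A B" and AB: "A > 2 * B + 3 * \<delta>" and B0: "B \<ge> 0"
  shows "1 \<le> m \<Longrightarrow> m \<le> n \<Longrightarrow> gp (x 0) (x m) (x (m - 1)) \<le> B + \<delta>"
proof (induction m)
  case (Suc m)
  show ?case
  proof (cases "m = 0")
    case True
    then show ?thesis using gromov_prod_base_self[of "x 0" "x 1"] B0 delta_nonneg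
      by (simp add: gromov_prod_commute)
  next
    case False
    have "m - 1 < n" "Suc (m - 1) = m" using False Suc.prems by auto
    then have "dist (x (m - 1)) (x m) \<ge> A" using c unfolding chain_def by metis
    moreover have "gp (x (m - 1)) (x (Suc m)) (x m) \<le> B"
      using c Suc.prems False unfolding chain_def by auto
    moreover have "gp (x 0) (x m) (x (m - 1)) \<le> B + \<delta>" using Suc False by auto
    moreover have "gp (x (m - 1)) (x (Suc m)) (x m)
        \<ge> min (gp (x (m - 1)) (x 0) (x m)) (gp (x 0) (x (Suc m)) (x m)) - \<delta>"
      by (rule four_point)
    moreover have "gp (x (m - 1)) (x 0) (x m) + gp (x 0) (x m) (x (m - 1)) = dist (x m) (x (m - 1))"
      using gromov_prod_add_swap_base[of "x 0" "x (m - 1)" "x m"]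
      by (simp add: gromov_prod_commute)
    ultimately show ?thesis using AB delta_nonneg by (simp add: dist_commute min_def split: if_splits)
  qed
qed simp

lemma chain_gp_interior:
  assumes c: "chain x n A B" and AB: "A > 2 * B + 3 * \<delta>" and B0: "B \<ge> 0" and k: "0 < k" "k < n"
  shows "gp (x 0) (x n) (x k) \<le> B + 2 * \<delta>"
proof -
  have "gp (x 0) (x (Suc k)) (x k) \<le> B + \<delta>" using chain_gp_start[OF c AB B0, of "Suc k"] k by auto
  moreover have "gp (x n) (x k) (x (Suc k)) \<le> B + \<delta>"
    using chain_gp_start[OF chain_reverse[OF c] AB B0, of "n - k"] k by (auto simp: Suc_diff_Suc)
  moreover have "dist (x k) (x (Suc k)) \<ge> A" using c k unfolding chain_def by auto
  moreover have "gp (x n) (x (Suc k)) (x k) + gp (x n) (x k) (x (Suc k)) = dist (x k) (x (Suc k))"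
    by (rule gromov_prod_add_swap_base)
  moreover have "gp (x 0) (x (Suc k)) (x k) \<ge> min (gp (x 0) (x n) (x k)) (gp (x n) (x (Suc k)) (x k)) - \<delta>"
    by (rule four_point)
  ultimately show ?thesis using AB delta_nonneg by auto
qed

lemma chain_dist_ge:
  assumes c: "chain x n A B" and AB: "A > 2 * B + 3 * \<delta>" and B0: "B \<ge> 0"
  shows "m \<le> n \<Longrightarrow> dist (x 0) (x m) \<ge> real m * (A - 2 * B - 2 * \<delta>)"
proof (induction m)
  case (Suc m)
  have "gp (x 0) (x (Suc m)) (x m) \<le> B + \<delta>" using chain_gp_start[OF c AB B0, of "Suc m"] Suc by auto
  moreover have "dist (x m) (x (Suc m)) \<ge> A" using c Suc unfolding chain_def by auto
  ultimately show ?case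
    using Suc dist_eq_gromov_prod[of "x 0" "x (Suc m)" "x m"] by (simp add: algebra_simps)
qed simp

definition word_prod :: "'g list \<Rightarrow> 'g" where
  "word_prod ls = foldr (\<otimes>) ls \<one>"

lemma word_prod_Nil [simp]: "word_prod [] = \<one>"
  unfolding word_prod_def by simp

lemma word_prod_Cons [simp]: "word_prod (x # xs) = x \<otimes> word_prod xs"
  unfolding word_prod_def by simp

lemma word_prod_closed [simp]: "set ls \<subseteq> carrier G \<Longrightarrow> word_prod ls \<in> carrier G"
  by (induction ls) auto

lemma word_prod_append:
  "set xs \<subseteq> carrier G \<Longrightarrow> set ys \<subseteq> carrier G \<Longrightarrow> word_prod (xs @ ys) = word_prod xs \<otimes> word_prod ys"
  by (induction xs) (auto simp: m_assoc)

lemma word_prod_replicate: "x \<in> carrier G \<Longrightarrow> word_prod (replicate n x) = x [^] n"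
  by (induction n) (auto simp: nat_pow_mult[of x 1, simplified] simp del: nat_pow_Suc2)

lemma set_concat_replicate_carrier [simp]:
  "set W \<subseteq> carrier G \<Longrightarrow> set (concat (replicate n W)) \<subseteq> carrier G"
  by (induction n) auto

lemma word_prod_concat_replicate:
  "set W \<subseteq> carrier G \<Longrightarrow> word_prod (concat (replicate n W)) = word_prod W [^] n"
proof (induction n)
  case (Suc n)
  then have "word_prod (concat (replicate (Suc n) W)) = word_prod W \<otimes> word_prod W [^] n"
    using word_prod_append[OF Suc.prems set_concat_replicate_carrier[OF Suc.prems]] by simp
  then show ?case using Suc nat_pow_Suc2[of "word_prod W" n] by simp
qed simp

lemma word_prod_rev_inv: "set xs \<subseteq> carrier G \<Longrightarrow> word_prod (rev (map (m_inv G) xs)) = inv (word_prod xs)"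
proof (induction xs)
  case (Cons x xs)
  then have "word_prod (rev (map (m_inv G) (x # xs))) = word_prod (rev (map (m_inv G) xs)) \<otimes> inv x"
    using word_prod_append[of "rev (map (m_inv G) xs)" "[inv x]"] by auto
  then show ?case using Cons by (simp add: inv_mult_group)
qed simp

definition word_orbit :: "'g list \<Rightarrow> nat \<Rightarrow> 'a" where
  "word_orbit ls k = \<phi> (word_prod (take k ls)) p"

lemma word_orbit_0 [simp]: "word_orbit ls 0 = p"
  unfolding word_orbit_def by simp

lemma word_orbit_append_length: "word_orbit (M @ R) (length M) = \<phi> (word_prod M) p"
  unfolding word_orbit_def by simp

lemma word_orbit_length: "word_orbit M (length M) = \<phi> (word_prod M) p"
  unfolding word_orbit_def by simp

lemma word_prod_take_Suc:
  "set ls \<subseteq> carrier G \<Longrightarrow> k < length ls \<Longrightarrow> word_prod (take (Suc k) ls) = word_prod (take k ls) \<otimes> ls ! k"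
proof -
  assume "set ls \<subseteq> carrier G" "k < length ls"
  then have "set (take k ls) \<subseteq> carrier G" "ls ! k \<in> carrier G"
    by (meson order_trans set_take_subset, meson nth_mem subsetD)
  with \<open>k < length ls\<close> show ?thesis by (simp add: take_Suc_conv_app_nth word_prod_append)
qed

definition alphabet :: "'g set \<Rightarrow> real \<Rightarrow> real \<Rightarrow> bool" where
  "alphabet \<Sigma> A B \<longleftrightarrow> \<Sigma> \<subseteq> carrier G \<and> (\<forall>x\<in>\<Sigma>. inv x \<in> \<Sigma>) \<and> (\<forall>x\<in>\<Sigma>. A \<le> dist p (\<phi> x p)) \<and>
     (\<forall>x\<in>\<Sigma>. \<forall>y\<in>\<Sigma>. x \<noteq> y \<longrightarrow> gp (\<phi> x p) (\<phi> y p) p \<le> B) \<and> 2 * B + 3 * \<delta> < A \<and> 0 \<le> B"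

definition reduced :: "'g set \<Rightarrow> 'g list \<Rightarrow> bool" where
  "reduced \<Sigma> L \<longleftrightarrow> set L \<subseteq> \<Sigma> \<and> successively (\<lambda>x y. y \<noteq> inv x) L"

lemma alphabet_margin: "alphabet \<Sigma> A B \<Longrightarrow> 2 * B + 3 * \<delta> < A \<and> 0 \<le> B"
  unfolding alphabet_def by auto

lemma alphabet_rate_pos: "alphabet \<Sigma> A B \<Longrightarrow> A - 2 * B - 2 * \<delta> > 0"
  using alphabet_margin delta_nonneg by force

lemma reduced_carrier: "alphabet \<Sigma> A B \<Longrightarrow> reduced \<Sigma> L \<Longrightarrow> set L \<subseteq> carrier G"
  unfolding alphabet_def reduced_def by auto

lemma reduced_append:
  "reduced \<Sigma> (xs @ ys) \<longleftrightarrow> reduced \<Sigma> xs \<and> reduced \<Sigma> ys \<and> (xs = [] \<or> ys = [] \<or> hd ys \<noteq> inv (last xs))"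
  unfolding reduced_def by (auto simp: successively_append_iff)

lemma reduced_rev_inv:
  assumes a: "alphabet \<Sigma> A B" and r: "reduced \<Sigma> xs"
  shows "reduced \<Sigma> (rev (map (m_inv G) xs))"
proof -
  have c: "\<Sigma> \<subseteq> carrier G" "\<forall>x\<in>\<Sigma>. inv x \<in> \<Sigma>" using a unfolding alphabet_def by auto
  have s: "set xs \<subseteq> \<Sigma>" "successively (\<lambda>x y. y \<noteq> inv x) xs" using r unfolding reduced_def by auto
  have "successively (\<lambda>x y. inv x \<noteq> inv (inv y)) xs"
    using s(2) by (rule successively_mono) (use s(1) c(1) in \<open>auto simp: subset_iff\<close>)
  then show ?thesis using s(1) c(2) unfolding reduced_def by (auto simp: successively_map)
qed

lemma reduced_of_no_inverse_pairs:
  assumes "set L \<subseteq> \<Sigma>" and "\<forall>x\<in>set L. \<forall>y\<in>set L. y \<noteq> inv x"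
  shows "reduced \<Sigma> L"
proof -
  have "successively (\<lambda>x y. y \<noteq> inv x) L"
    by (rule successively_mono[OF successively_if_sorted_wrt[OF sorted_wrt_true]]) (use assms(2) in blast)
  with assms(1) show ?thesis unfolding reduced_def by blast
qed

lemma reduced_word_chain:
  assumes a: "alphabet \<Sigma> A B" and r: "reduced \<Sigma> L"
  shows "chain (word_orbit L) (length L) A B"
  unfolding chain_def
proof safe
  have s: "set L \<subseteq> \<Sigma>" "successively (\<lambda>x y. y \<noteq> inv x) L" using r unfolding reduced_def by auto
  have sc: "set L \<subseteq> carrier G" by (rule reduced_carrier[OF a r])
  have tc: "word_prod (take k L) \<in> carrier G" for k using sc by (meson order_trans set_take_subset word_prod_closed)
  have orbit_Suc: "word_orbit L (Suc k) = \<phi> (word_prod (take k L)) (\<phi> (L ! k) p)" if "k < length L" for k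
    using that sc tc unfolding word_orbit_def by (simp add: word_prod_take_Suc act_mult subset_iff)
  fix k assume k: "k < length L"
  have "dist (word_orbit L k) (word_orbit L (Suc k)) = dist p (\<phi> (L ! k) p)"
    using k tc unfolding orbit_Suc[OF k] by (simp add: word_orbit_def)
  then show "A \<le> dist (word_orbit L k) (word_orbit L (Suc k))"
    using a s(1) k unfolding alphabet_def by (auto simp: subset_iff)
next
  have s: "set L \<subseteq> \<Sigma>" "successively (\<lambda>x y. y \<noteq> inv x) L" using r unfolding reduced_def by auto
  have sc: "set L \<subseteq> carrier G" by (rule reduced_carrier[OF a r])
  fix k assume k: "0 < k" "k < length L"
  define j where "j = k - 1"
  define W where "W = word_prod (take j L)"
  define u where "u = L ! j"
  define v where "v = L ! k"
  have kj: "k = Suc j" using k unfolding j_def by auto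
  have uv: "u \<in> \<Sigma>" "v \<in> \<Sigma>" "v \<noteq> inv u"
    using s k successively_nth[OF s(2), of j] unfolding u_def v_def kj by auto
  have c: "u \<in> carrier G" "v \<in> carrier G" "W \<in> carrier G"
    using uv a sc unfolding W_def alphabet_def by (auto, meson order_trans set_take_subset word_prod_closed)
  have "word_prod (take k L) = W \<otimes> u" "word_prod (take (Suc k) L) = W \<otimes> u \<otimes> v"
    using sc k unfolding W_def u_def v_def kj by (simp_all add: word_prod_take_Suc)
  then have "gp (word_orbit L (k - 1)) (word_orbit L (Suc k)) (word_orbit L k)
      = gp (\<phi> u (\<phi> (inv u) p)) (\<phi> u (\<phi> v p)) (\<phi> u p)"
    using c unfolding word_orbit_def j_def[symmetric] W_def[symmetric] by (simp add: act_mult)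
  also have "\<dots> = gp (\<phi> (inv u) p) (\<phi> v p) p"
    using c by (simp del: act_inv_cancel_right)
  also have "\<dots> \<le> B" using a uv unfolding alphabet_def by metis
  finally show "gp (word_orbit L (k - 1)) (word_orbit L (Suc k)) (word_orbit L k) \<le> B" .
qed

lemma word_gp_interior:
  assumes a: "alphabet \<Sigma> A B" and r: "reduced \<Sigma> L" and k: "0 < k" "k < m" "m \<le> length L"
  shows "gp p (word_orbit L m) (word_orbit L k) \<le> B + 2 * \<delta>"
  using chain_gp_interior[OF chain_prefix[OF reduced_word_chain[OF a r] k(3)]] alphabet_margin[OF a] k
  by auto

lemma word_dist_ge:
  assumes a: "alphabet \<Sigma> A B" and r: "reduced \<Sigma> L" and m: "m \<le> length L"
  shows "dist p (word_orbit L m) \<ge> real m * (A - 2 * B - 2 * \<delta>)"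
  using chain_dist_ge[OF reduced_word_chain[OF a r]] alphabet_margin[OF a] m by auto

lemma word_gp_prefix:
  assumes a: "alphabet \<Sigma> A B" and r: "reduced \<Sigma> L" and k: "k \<le> m" "m \<le> length L"
  shows "gp (word_orbit L k) (word_orbit L m) p \<ge> dist p (word_orbit L k) - (B + 2 * \<delta>)"
proof -
  consider "k = 0" | "k = m" | "0 < k" "k < m" using k by linarith
  then show ?thesis
  proof cases
    case 3
    then have "gp p (word_orbit L m) (word_orbit L k) \<le> B + 2 * \<delta>" using word_gp_interior[OF a r] k by auto
    moreover have "gp (word_orbit L m) (word_orbit L k) p + gp (word_orbit L m) p (word_orbit L k)
        = dist p (word_orbit L k)"
      by (rule gromov_prod_add_swap_base)
    ultimately show ?thesis by (simp add: gromov_prod_commute)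
  qed (use alphabet_margin[OF a] delta_nonneg gromov_prod_nonneg[of p "word_orbit L m" p]
        in \<open>auto simp: gromov_prod_self dist_commute\<close>)
qed

lemma word_dist_le:
  assumes c: "\<Sigma> \<subseteq> carrier G" and bound: "\<forall>x\<in>\<Sigma>. dist p (\<phi> x p) \<le> R" and s: "set L \<subseteq> \<Sigma>"
  shows "dist p (\<phi> (word_prod L) p) \<le> real (length L) * R"
  using s
proof (induction L)
  case (Cons x L)
  have xc: "x \<in> carrier G" "word_prod L \<in> carrier G" using Cons c by auto
  have "dist p (\<phi> (word_prod (x # L)) p) \<le> dist p (\<phi> x p) + dist (\<phi> x p) (\<phi> x (\<phi> (word_prod L) p))"
    using xc dist_triangle[of p "\<phi> x (\<phi> (word_prod L) p)" "\<phi> x p"] by (simp add: act_mult del: act_dist)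
  also have "\<dots> \<le> R + real (length L) * R" using Cons bound xc by (intro add_mono) auto
  finally show ?case by (simp add: algebra_simps)
qed simp

lemma gp_diverging_words:
  assumes a: "alphabet \<Sigma> A B" and bound: "\<forall>x\<in>\<Sigma>. dist p (\<phi> x p) \<le> R"
    and r1: "reduced \<Sigma> (w @ l # r1)" and r2: "reduced \<Sigma> (w @ l' # r2)" and ll: "l \<noteq> l'"
  shows "gp (\<phi> (word_prod (w @ l # r1)) p) (\<phi> (word_prod (w @ l' # r2)) p) p \<le> real (length w) * R + B + 2 * \<delta>"
proof -
  have \<Sigma>: "\<Sigma> \<subseteq> carrier G" using a unfolding alphabet_def by auto
  have ws: "set w \<subseteq> \<Sigma>" "set (l # r1) \<subseteq> \<Sigma>" "set (l' # r2) \<subseteq> \<Sigma>"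
    using r1 r2 unfolding reduced_def by auto
  then have wc: "set w \<subseteq> carrier G" "set (l # r1) \<subseteq> carrier G" "set (l' # r2) \<subseteq> carrier G"
    using \<Sigma> by auto
  define W U V where "W = word_prod w" and "U = word_prod (l # r1)" and "V = word_prod (l' # r2)"
  have c: "W \<in> carrier G" "U \<in> carrier G" "V \<in> carrier G" unfolding W_def U_def V_def using wc by auto
  have "\<phi> (word_prod (w @ l # r1)) p = \<phi> W (\<phi> U p)" "\<phi> (word_prod (w @ l' # r2)) p = \<phi> W (\<phi> V p)"
    unfolding W_def U_def V_def using wc by (simp_all add: word_prod_append act_mult del: word_prod_Cons)
  moreover have "gp (\<phi> W (\<phi> U p)) (\<phi> W (\<phi> V p)) p \<le> gp (\<phi> U p) (\<phi> V p) p + dist p (\<phi> W p)"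
    using gromov_prod_base_change[of "\<phi> W (\<phi> U p)" "\<phi> W (\<phi> V p)" p "\<phi> W p"] c by simp
  moreover have "dist p (\<phi> W p) \<le> real (length w) * R"
    unfolding W_def using word_dist_le[OF \<Sigma> bound ws(1)] .
  \<comment> \<open>Translating by \<open>U\<inverse>\<close> turns the two words into one reduced word passing through \<open>U\<inverse> p\<close>.\<close>
  moreover have "gp (\<phi> U p) (\<phi> V p) p \<le> B + 2 * \<delta>"
  proof -
    define R where "R = rev (map (m_inv G) (l # r1))"
    have R: "set R \<subseteq> carrier G" "word_prod R = inv U" "length R = length (l # r1)"
      using wc word_prod_rev_inv[OF wc(2)] unfolding R_def U_def by auto
    have "reduced \<Sigma> R" "reduced \<Sigma> (l' # r2)"
      using reduced_rev_inv[OF a] r1 r2 reduced_append unfolding R_def by blast+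
    moreover have "last R = inv l" unfolding R_def by (simp add: last_rev)
    ultimately have "reduced \<Sigma> (R @ l' # r2)"
      using ll wc unfolding reduced_append by auto
    then have "gp p (word_orbit (R @ l' # r2) (length (R @ l' # r2))) (word_orbit (R @ l' # r2) (length R))
        \<le> B + 2 * \<delta>"
      using word_gp_interior[OF a] R(3) by simp
    moreover have "word_prod (R @ l' # r2) = inv U \<otimes> V"
      using word_prod_append[OF R(1) wc(3)] R(2) unfolding V_def by simp
    ultimately have "gp p (\<phi> (inv U) (\<phi> V p)) (\<phi> (inv U) p) \<le> B + 2 * \<delta>"
      using c unfolding word_orbit_length word_orbit_append_length R(2) by (simp add: act_mult)
    then show ?thesis using gromov_prod_act[of "inv U" "\<phi> U p" "\<phi> V p" p] c by simp
  qed
  ultimately show ?thesis by simp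
qed

lemma reduced_concat_replicate:
  assumes r: "reduced \<Sigma> (W @ W)" and ne: "W \<noteq> []"
  shows "reduced \<Sigma> (concat (replicate k W))"
proof (induction k)
  case (Suc k)
  have "reduced \<Sigma> W" "hd W \<noteq> inv (last W)" using r ne reduced_append by auto
  moreover have "hd (concat (replicate k W)) = hd W" if "k > 0" using that ne by (cases k) auto
  ultimately show ?case using Suc ne reduced_append[of \<Sigma> W "concat (replicate k W)"] by auto
qed (simp add: reduced_def)

lemma dist_power_subadditive:
  assumes z: "z \<in> carrier G"
  shows "dist p (\<phi> (z [^] ((k::nat) + m)) p) \<le> dist p (\<phi> (z [^] k) p) + dist p (\<phi> (z [^] m) p)"
proof -
  have "\<phi> (z [^] (k + m)) p = \<phi> (z [^] k) (\<phi> (z [^] m) p)" using z by (simp add: nat_pow_mult[symmetric] act_mult)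
  then show ?thesis
    using z dist_triangle[of p "\<phi> (z [^] (k + m)) p" "\<phi> (z [^] k) p"] by simp
qed

text \<open>\<open>W @ W\<close> reduced means that \<open>W\<close> is cyclically reduced, so every power of \<open>W\<close> is a reduced
  word.\<close>

lemma power_word_orbit:
  assumes "set W \<subseteq> carrier G" and "(k::nat) \<le> k'"
  shows "word_orbit (concat (replicate k' W)) (k * length W) = \<phi> (word_prod W [^] k) p"
proof -
  have "concat (replicate k' W) = concat (replicate k W) @ concat (replicate (k' - k) W)"
    using assms(2) by (metis le_add_diff_inverse concat_append replicate_add)
  then show ?thesis using word_orbit_append_length[of "concat (replicate k W)"]
    word_prod_concat_replicate[OF assms(1)] by (simp add: length_concat sum_list_replicate)
qed

context
  fixes \<Sigma> A B W
  assumes a: "alphabet \<Sigma> A B" and r: "reduced \<Sigma> (W @ W)" and ne: "W \<noteq> []"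
begin

private lemma carrier_W: "set W \<subseteq> carrier G"
  using reduced_carrier[OF a r] by simp

lemma cyclic_power_gp_prefix:
  assumes "(k::nat) \<le> k'"
  shows "gp (\<phi> (word_prod W [^] k) p) (\<phi> (word_prod W [^] k') p) p
    \<ge> dist p (\<phi> (word_prod W [^] k) p) - (B + 2 * \<delta>)"
  using word_gp_prefix[OF a reduced_concat_replicate[OF r ne, of k'], of "k * length W" "k' * length W"] assms
    power_word_orbit[OF carrier_W assms] power_word_orbit[OF carrier_W order_refl, of k']
  by (simp add: length_concat sum_list_replicate)

lemma cyclic_power_dist_ge: "dist p (\<phi> (word_prod W [^] (k::nat)) p) \<ge> real k * (A - 2 * B - 2 * \<delta>)"
proof -
  have "dist p (\<phi> (word_prod W [^] k) p) \<ge> real (k * length W) * (A - 2 * B - 2 * \<delta>)"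
    using word_dist_ge[OF a reduced_concat_replicate[OF r ne, of k], of "k * length W"]
      power_word_orbit[OF carrier_W order_refl, of k] by (simp add: length_concat sum_list_replicate)
  moreover have "real k \<le> real (k * length W)" using ne by (cases W) auto
  ultimately show ?thesis
    using mult_right_mono[of "real k" "real (k * length W)" "A - 2 * B - 2 * \<delta>"] alphabet_rate_pos[OF a]
    by linarith
qed

lemma cyclic_power_dist_superadditive:
  "dist p (\<phi> (word_prod W [^] ((k::nat) + m)) p)
    \<ge> dist p (\<phi> (word_prod W [^] k) p) + dist p (\<phi> (word_prod W [^] m) p) - 2 * (B + 2 * \<delta>)"
proof (cases "k = 0 \<or> m = 0")
  case True
  then show ?thesis using alphabet_margin[OF a] delta_nonneg by auto
next
  case False
  define z where "z = word_prod W"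
  have z: "z \<in> carrier G" unfolding z_def using carrier_W by simp
  have "gp p (\<phi> (z [^] (k + m)) p) (\<phi> (z [^] k) p) \<le> B + 2 * \<delta>"
    using word_gp_interior[OF a reduced_concat_replicate[OF r ne, of "k + m"], of "k * length W" "(k + m) * length W"]
      power_word_orbit[OF carrier_W, of k "k + m"] power_word_orbit[OF carrier_W order_refl, of "k + m"]
      False ne unfolding z_def by (simp add: length_concat sum_list_replicate)
  moreover have "dist (\<phi> (z [^] k) p) (\<phi> (z [^] (k + m)) p) = dist p (\<phi> (z [^] m) p)"
    using z by (simp add: nat_pow_mult[symmetric] act_mult)
  ultimately show ?thesis
    using dist_eq_gromov_prod[of p "\<phi> (z [^] (k + m)) p" "\<phi> (z [^] k) p"] unfolding z_def
    by (simp add: gromov_prod_commute)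
qed

lemma cyclic_word_loxodromic: "loxodromic G \<phi> p (word_prod W)"
proof -
  define f where "f k = dist p (\<phi> (word_prod W [^] (k::nat)) p)" for k
  have "\<exists>L>0. (\<lambda>k. f k / real k) \<longlonglongrightarrow> L"
    using quasi_additive_linear_rate[of f "2 * (B + 2 * \<delta>)" "A - 2 * B - 2 * \<delta>"]
      dist_power_subadditive cyclic_power_dist_superadditive cyclic_power_dist_ge alphabet_rate_pos[OF a]
      carrier_W unfolding f_def by auto
  then show ?thesis unfolding loxodromic_def f_def using carrier_W by (simp add: dist_commute)
qed

lemma cyclic_power_gromov_seq: "gromov_seq p (\<lambda>k. \<phi> (word_prod W [^] (k::nat)) p)"
  using gromov_seq_of_linear_prefix_bound[OF cyclic_power_gp_prefix cyclic_power_dist_ge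
      alphabet_rate_pos[OF a]] .

end

section \<open>Boundary points\<close>

lemma seq_equiv_sym: "seq_equiv p u v \<Longrightarrow> seq_equiv p v u"
  unfolding seq_equiv_def by (metis gromov_prod_commute)

lemma bd_class_subset:
  assumes e: "seq_equiv p u v"
  shows "bd_class p u \<subseteq> bd_class p v"
proof
  fix w assume "w \<in> bd_class p u"
  then have w: "gromov_seq p w" "seq_equiv p u w" unfolding bd_class_def by auto
  have "seq_equiv p v w" unfolding seq_equiv_def
  proof
    fix M
    obtain N1 where N1: "\<forall>m\<ge>N1. \<forall>n\<ge>N1. M + \<delta> \<le> gp (u m) (v n) p" using e unfolding seq_equiv_def by blast
    obtain N2 where N2: "\<forall>m\<ge>N2. \<forall>n\<ge>N2. M + \<delta> \<le> gp (u m) (w n) p" using w(2) unfolding seq_equiv_def by blast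
    define N where "N = max N1 N2"
    show "\<exists>N. \<forall>m\<ge>N. \<forall>n\<ge>N. M \<le> gp (v m) (w n) p"
    proof (intro exI allI impI)
      fix m n assume "N \<le> m" "N \<le> n"
      then have "M + \<delta> \<le> gp (u N) (v m) p" "M + \<delta> \<le> gp (u N) (w n) p"
        using N1 N2 unfolding N_def by auto
      then have "M + \<delta> \<le> gp (v m) (u N) p" "M + \<delta> \<le> gp (u N) (w n) p"
        by (simp_all add: gromov_prod_commute)
      then show "M \<le> gp (v m) (w n) p" using four_point[of "v m" "u N" p "w n"] by linarith
    qed
  qed
  then show "w \<in> bd_class p v" using w unfolding bd_class_def by auto
qed

lemma bd_class_eq: "seq_equiv p u v \<Longrightarrow> bd_class p u = bd_class p v"
  using bd_class_subset seq_equiv_sym by blast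

lemma gromov_prod_act_ge:
  assumes g: "g \<in> carrier G"
  shows "gp (\<phi> g x) (\<phi> g y) p \<ge> gp x y p - dist p (\<phi> (inv g) p)"
  using gromov_prod_base_change[of x y p "\<phi> (inv g) p"]
    gromov_prod_act[of g x y "\<phi> (inv g) p"] g by simp

lemma bd_class_act:
  assumes g: "g \<in> carrier G" and R: "\<And>n. dist (\<phi> g (u n)) (u n) \<le> R" and w: "w \<in> bd_class p u"
  shows "(\<lambda>n. \<phi> g (w n)) \<in> bd_class p u"
proof -
  define R1 where "R1 = dist p (\<phi> (inv g) p)"
  have act_ge: "gp (\<phi> g x) (\<phi> g y) p \<ge> gp x y p - R1" for x y
    unfolding R1_def by (rule gromov_prod_act_ge[OF g])
  have w': "gromov_seq p w" "seq_equiv p u w" using w unfolding bd_class_def by auto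
  have "gromov_seq p (\<lambda>n. \<phi> g (w n))" unfolding gromov_seq_def
  proof
    fix M
    obtain N where N: "\<forall>m\<ge>N. \<forall>n\<ge>N. M + R1 \<le> gp (w m) (w n) p"
      using w'(1) unfolding gromov_seq_def by blast
    show "\<exists>N. \<forall>m\<ge>N. \<forall>n\<ge>N. M \<le> gp (\<phi> g (w m)) (\<phi> g (w n)) p"
    proof (intro exI allI impI)
      fix m n assume "N \<le> m" "N \<le> n"
      then show "M \<le> gp (\<phi> g (w m)) (\<phi> g (w n)) p" using N act_ge[of "w m" "w n"] by force
    qed
  qed
  moreover have "seq_equiv p u (\<lambda>n. \<phi> g (w n))" unfolding seq_equiv_def
  proof
    fix M
    obtain N where N: "\<forall>m\<ge>N. \<forall>n\<ge>N. M + R1 + R \<le> gp (u m) (w n) p" using w'(2) unfolding seq_equiv_def by blast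
    show "\<exists>N. \<forall>m\<ge>N. \<forall>n\<ge>N. M \<le> gp (u m) (\<phi> g (w n)) p"
    proof (intro exI allI impI)
      fix m n assume "N \<le> m" "N \<le> n"
      then have "M + R1 + R \<le> gp (u m) (w n) p" using N by blast
      then show "M \<le> gp (u m) (\<phi> g (w n)) p"
        using act_ge[of "u m" "w n"] R[of m] dist_commute[of "u m" "\<phi> g (u m)"]
          gromov_prod_lipschitz[where x="u m" and y="\<phi> g (u m)" and z="\<phi> g (w n)" and w=p]
        by linarith
    qed
  qed
  ultimately show ?thesis unfolding bd_class_def by auto
qed

lemma bd_class_fixed:
  assumes g: "g \<in> carrier G" and R: "\<And>n. dist (\<phi> g (u n)) (u n) \<le> R" and u: "gromov_seq p u"
  shows "bd_class p u \<in> bd_fixed_set \<phi> p g"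
proof -
  have R': "dist (\<phi> (inv g) (u n)) (u n) \<le> R" for n
    using R[of n] g act_dist[of g "\<phi> (inv g) (u n)" "u n"] by (simp add: dist_commute)
  have inv_act: "(\<lambda>n. \<phi> (inv g) (w n)) \<in> bd_class p u" if "w \<in> bd_class p u" for w
    by (rule bd_class_act[OF inv_closed[OF g] R' that])
  have "bd_act \<phi> g (bd_class p u) = bd_class p u"
  proof
    show "bd_act \<phi> g (bd_class p u) \<subseteq> bd_class p u"
      unfolding bd_act_def using bd_class_act[OF g R] by auto
    show "bd_class p u \<subseteq> bd_act \<phi> g (bd_class p u)"
    proof
      fix w assume "w \<in> bd_class p u"
      then show "w \<in> bd_act \<phi> g (bd_class p u)"
        unfolding bd_act_def using inv_act g by (auto intro!: exI[of _ "\<lambda>n. \<phi> (inv g) (w n)"])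
    qed
  qed
  moreover have "bd_class p u \<in> gromov_boundary p" using u unfolding gromov_boundary_def by auto
  ultimately show ?thesis unfolding bd_fixed_set_def by auto
qed

text \<open>If the Gromov products of two quasi-geodesic rays were unbounded, the rays would define the
  same boundary point, which would then be fixed by both \<open>g\<close> and \<open>h\<close>.\<close>

lemma gp_bounded_of_disjoint_fixed_sets:
  assumes g: "g \<in> carrier G" and h: "h \<in> carrier G"
    and prefix_u: "\<And>k k'. k \<le> k' \<Longrightarrow> gp (u k) (u k') p \<ge> dist p (u k) - c"
    and prefix_v: "\<And>k k'. k \<le> k' \<Longrightarrow> gp (v k) (v k') p \<ge> dist p (v k) - c"
    and u: "gromov_seq p u" and v: "gromov_seq p v"
    and Ru: "\<And>n. dist (\<phi> g (u n)) (u n) \<le> R" and Rv: "\<And>n. dist (\<phi> h (v n)) (v n) \<le> R'"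
    and disj: "bd_fixed_set \<phi> p g \<inter> bd_fixed_set \<phi> p h = {}"
  shows "\<exists>M. \<forall>K. gp (u K) (v K) p \<le> M"
proof (rule ccontr)
  assume "\<not> (\<exists>M. \<forall>K. gp (u K) (v K) p \<le> M)"
  then have big: "\<forall>M. \<exists>K. gp (u K) (v K) p > M" by (meson not_le)
  have "seq_equiv p u v" unfolding seq_equiv_def
  proof
    fix M
    obtain K where K: "gp (u K) (v K) p > M + \<bar>c\<bar> + 2 * \<delta>" using big by blast
    show "\<exists>N. \<forall>m\<ge>N. \<forall>n\<ge>N. M \<le> gp (u m) (v n) p"
    proof (intro exI allI impI)
      fix m n assume mn: "K \<le> m" "K \<le> n"
      have "gp (u m) (u K) p \<ge> gp (u K) (v K) p - c"
        using prefix_u[OF mn(1)] gromov_prod_le_dist[of "u K" "v K" p]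
        by (simp add: dist_commute gromov_prod_commute)
      moreover have "gp (v K) (v n) p \<ge> gp (u K) (v K) p - c"
        using prefix_v[OF mn(2)] gromov_prod_le_dist[of "v K" "u K" p]
        by (simp add: dist_commute gromov_prod_commute)
      ultimately show "M \<le> gp (u m) (v n) p"
        using four_point_twice[of "u m" "u K" p "v K" "v n"] K abs_ge_self[of c] by linarith
    qed
  qed
  then have "bd_class p u = bd_class p v" by (rule bd_class_eq)
  then have "bd_class p u \<in> bd_fixed_set \<phi> p g \<inter> bd_fixed_set \<phi> p h"
    using bd_class_fixed[OF g Ru u] bd_class_fixed[OF h Rv v] by simp
  then show False using disj by blast
qed

lemma V_set_gp_ge:
  assumes x: "x \<in> V_set p C (bd_class p u)" and near: "\<forall>m\<ge>1. gp (u m) z p \<ge> C"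
  shows "gp x z p \<ge> C - 1/4 - 2 * \<delta>"
proof -
  have "ereal (C - 1/4) < (SUP v\<in>bd_class p u. liminf (\<lambda>n. ereal (gp x (v n) p)))"
    using x unfolding V_set_def gromov_prod_bd_def by (simp add: less_le_trans[of _ "ereal C"])
  then obtain v where v: "v \<in> bd_class p u" and lim: "ereal (C - 1/4) < liminf (\<lambda>n. ereal (gp x (v n) p))"
    by (auto simp: less_SUP_iff)
  have "eventually (\<lambda>n. ereal (C - 1/4) < ereal (gp x (v n) p)) sequentially"
    using lim by (rule less_LiminfD)
  then obtain N1 where N1: "\<And>n. n \<ge> N1 \<Longrightarrow> C - 1/4 < gp x (v n) p"
    unfolding eventually_sequentially by auto
  obtain N2 where N2: "\<forall>m\<ge>N2. \<forall>n\<ge>N2. C \<le> gp (u m) (v n) p"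
    using v unfolding bd_class_def seq_equiv_def by blast
  define n m where "n = max N1 N2" and "m = max N2 1"
  have "C \<le> gp (u m) (v n) p" using N2 unfolding n_def m_def by auto
  moreover have "C - 1/4 < gp x (v n) p" "C \<le> gp (u m) z p"
    using N1 near unfolding n_def m_def by auto
  ultimately show ?thesis
    using four_point_twice[of x "v n" p "u m" z] gromov_prod_commute[of "u m" "v n" p] by linarith
qed

lemma in_V_set_of_gp_ge:
  assumes u: "gromov_seq p u" and near: "\<forall>m\<ge>1. gp z (u m) p \<ge> C"
  shows "z \<in> V_set p C (bd_class p u)"
proof -
  have "u \<in> bd_class p u" using u unfolding bd_class_def gromov_seq_def seq_equiv_def by simp
  moreover have "ereal C \<le> liminf (\<lambda>n. ereal (gp z (u n) p))"
    using near by (intro Liminf_bounded) (auto simp: eventually_sequentially)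
  ultimately show ?thesis unfolding V_set_def gromov_prod_bd_def by (auto intro: SUP_upper2)
qed

section \<open>Ping-pong pairs\<close>

lemma loxodromic_power_gap:
  assumes "loxodromic G \<phi> p g"
  shows "\<exists>n::nat\<ge>1. dist p (\<phi> (g [^] (2 * n)) p) - dist p (\<phi> (g [^] n) p) > c"
proof -
  define f where "f n = dist p (\<phi> (g [^] (n::nat)) p)" for n
  obtain L where L: "L > 0" and lim: "(\<lambda>n. f n / real n) \<longlonglongrightarrow> L"
    using assms unfolding loxodromic_def f_def by (auto simp: dist_commute)
  have "(\<lambda>n. f (2 * n) / real (2 * n)) \<longlonglongrightarrow> L"
    using LIMSEQ_subseq_LIMSEQ[OF lim, of "\<lambda>n. 2 * n"] by (simp add: strict_mono_def o_def)
  then have "(\<lambda>n. 2 * (f (2 * n) / real (2 * n)) - f n / real n) \<longlonglongrightarrow> 2 * L - L"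
    by (intro tendsto_intros lim)
  then have "eventually (\<lambda>n. L / 2 < 2 * (f (2 * n) / real (2 * n)) - f n / real n) sequentially"
    using L by (intro order_tendstoD(1)) auto
  then obtain N1 where N1: "\<And>n. n \<ge> N1 \<Longrightarrow> L / 2 < 2 * (f (2 * n) / real (2 * n)) - f n / real n"
    unfolding eventually_sequentially by auto
  obtain N2 :: nat where N2: "c < real N2 * (L / 2)" using ex_less_of_nat_mult L by fastforce
  define n where "n = max (max N1 N2) 1"
  have n: "n \<ge> 1" "L / 2 < 2 * (f (2 * n) / real (2 * n)) - f n / real n"
    using N1 unfolding n_def by auto
  have "real N2 * (L / 2) \<le> real n * (L / 2)" using L unfolding n_def by (intro mult_right_mono) auto
  with N2 have "c < real n * (L / 2)" by linarith
  moreover have "real n * (L / 2) < f (2 * n) - f n" using n by (simp add: field_simps)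
  ultimately show ?thesis using n(1) unfolding f_def by (intro exI[of _ n]) auto
qed

text \<open>A large power \<open>x\<close> of a loxodromic element is a letter: the triangle \<open>x\<inverse> p, p, x p\<close> is thin at
  \<open>p\<close> because \<open>d(x\<inverse> p, x p) = d(p, x\<^sup>2 p)\<close> is almost \<open>2 d(p, x p)\<close>.\<close>

lemma loxodromic_letter:
  assumes lox: "loxodromic G \<phi> p g"
  shows "\<exists>n::nat\<ge>1. \<exists>A B. alphabet {g [^] n, inv (g [^] n)} A B \<and> g [^] n \<noteq> inv (g [^] n)"
proof -
  have g: "g \<in> carrier G" using lox unfolding loxodromic_def by auto
  obtain n :: nat where n: "n \<ge> 1"
    and gap: "dist p (\<phi> (g [^] (2 * n)) p) - dist p (\<phi> (g [^] n) p) > 3 * \<delta>"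
    using loxodromic_power_gap[OF lox] by blast
  define x where "x = g [^] n"
  have x: "x \<in> carrier G" "inv x \<in> carrier G" unfolding x_def using g by auto
  define A B where "A = dist p (\<phi> x p)" and "B = gp (\<phi> x p) (\<phi> (inv x) p) p"
  have "dist (\<phi> x p) (\<phi> (inv x) p) = dist (\<phi> (x \<otimes> x) p) p"
    using act_dist[of x "\<phi> x p" "\<phi> (inv x) p"] x by (simp add: act_mult dist_commute)
  also have "x \<otimes> x = g [^] (2 * n)" unfolding x_def using g by (simp add: nat_pow_mult mult_2)
  finally have "2 * B + 3 * \<delta> < A"
    using gap dist_act_inv[OF x(1)] unfolding A_def B_def x_def gromov_prod_def
    by (auto simp: dist_commute field_simps)
  moreover have "B \<ge> 0" unfolding B_def by (rule gromov_prod_nonneg)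
  moreover have "x \<noteq> inv x"
  proof
    assume "x = inv x"
    then have "B = A" unfolding A_def B_def by (simp add: gromov_prod_self dist_commute)
    then show False using calculation delta_nonneg by simp
  qed
  ultimately have "alphabet {x, inv x} A B \<and> x \<noteq> inv x"
    using x dist_act_inv unfolding alphabet_def A_def B_def by (auto simp: gromov_prod_commute)
  then have "\<exists>A B. alphabet {g [^] n, inv (g [^] n)} A B \<and> g [^] n \<noteq> inv (g [^] n)"
    unfolding x_def by blast
  with n show ?thesis by blast
qed

context
  fixes \<Sigma> A B x
  assumes a: "alphabet \<Sigma> A B" and x: "x \<in> \<Sigma>" "x \<noteq> inv x"
begin

private lemma letter_carrier: "x \<in> carrier G"
  using a x unfolding alphabet_def by auto

private lemma letter_cyclic: "reduced \<Sigma> ([x] @ [x])"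
  using x unfolding reduced_def by simp

lemma letter_power_gp_prefix:
  "(k::nat) \<le> k' \<Longrightarrow> gp (\<phi> (x [^] k) p) (\<phi> (x [^] k') p) p \<ge> dist p (\<phi> (x [^] k) p) - (B + 2 * \<delta>)"
  using cyclic_power_gp_prefix[OF a letter_cyclic] by (simp add: letter_carrier)

lemma letter_power_dist_ge: "dist p (\<phi> (x [^] (k::nat)) p) \<ge> real k * (A - 2 * B - 2 * \<delta>)"
  using cyclic_power_dist_ge[OF a letter_cyclic] by (simp add: letter_carrier)

lemma letter_power_gromov_seq: "gromov_seq p (\<lambda>k. \<phi> (x [^] (k::nat)) p)"
  using cyclic_power_gromov_seq[OF a letter_cyclic] by (simp add: letter_carrier)

lemma letter_power_gp_inv_power:
  assumes K: "K \<ge> 1" and bound: "\<forall>z\<in>\<Sigma>. dist p (\<phi> z p) \<le> R"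
  shows "gp (\<phi> (x [^] (K::nat)) p) (\<phi> (inv x [^] K) p) p \<le> B + 2 * \<delta>"
proof -
  have ix: "inv x \<in> \<Sigma>" "inv x \<noteq> inv (inv x)" "inv x \<in> carrier G"
    using a x letter_carrier unfolding alphabet_def by auto
  obtain K' where K': "K = Suc K'" using K by (cases K) auto
  have "reduced \<Sigma> (replicate K x)" "reduced \<Sigma> (replicate K (inv x))"
    using reduced_concat_replicate[OF letter_cyclic, of K]
      reduced_concat_replicate[of \<Sigma> "[inv x]" K] ix by (simp_all add: reduced_def)
  then have "gp (\<phi> (word_prod ([] @ x # replicate K' x)) p) (\<phi> (word_prod ([] @ inv x # replicate K' (inv x))) p) p
      \<le> real (length ([]::'g list)) * R + B + 2 * \<delta>"
    using K' x by (intro gp_diverging_words[OF a bound]) auto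
  then show ?thesis
    using letter_carrier ix K' word_prod_replicate[of x K] word_prod_replicate[of "inv x" K] by simp
qed

end

text \<open>Powers of letters commuting with \<open>g\<close> and \<open>h\<close> run along quasi-geodesic rays that \<open>g\<close>, resp.
  \<open>h\<close>, move by a bounded amount, so the rays end at fixed points of \<open>g\<close>, resp. \<open>h\<close>.\<close>

lemma letter_powers_gp_bounded:
  assumes disj: "bd_fixed_set \<phi> p g \<inter> bd_fixed_set \<phi> p h = {}" and g: "g \<in> carrier G" and h: "h \<in> carrier G"
    and ax: "alphabet \<Sigma>x Ax Bx" and x: "x \<in> \<Sigma>x" "x \<noteq> inv x" "g \<otimes> x = x \<otimes> g"
    and ay: "alphabet \<Sigma>y Ay By" and y: "y \<in> \<Sigma>y" "y \<noteq> inv y" "h \<otimes> y = y \<otimes> h"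
  shows "\<exists>M. \<forall>K::nat. gp (\<phi> (x [^] K) p) (\<phi> (y [^] K) p) p \<le> M"
proof (rule gp_bounded_of_disjoint_fixed_sets[OF g h, where c = "Bx + By + 2 * \<delta>"])
  have "Bx \<ge> 0" "By \<ge> 0" using alphabet_margin[OF ax] alphabet_margin[OF ay] by auto
  then show "gp (\<phi> (x [^] k) p) (\<phi> (x [^] k') p) p \<ge> dist p (\<phi> (x [^] k) p) - (Bx + By + 2 * \<delta>)"
    "gp (\<phi> (y [^] k) p) (\<phi> (y [^] k') p) p \<ge> dist p (\<phi> (y [^] k) p) - (Bx + By + 2 * \<delta>)"
    if "k \<le> k'" for k k' :: nat
    using letter_power_gp_prefix[OF ax x(1,2) that] letter_power_gp_prefix[OF ay y(1,2) that] by linarith+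
  have "x \<in> carrier G" "y \<in> carrier G" using ax ay x y unfolding alphabet_def by auto
  then show "dist (\<phi> g (\<phi> (x [^] n) p)) (\<phi> (x [^] n) p) \<le> dist (\<phi> g p) p"
    "dist (\<phi> h (\<phi> (y [^] n) p)) (\<phi> (y [^] n) p) \<le> dist (\<phi> h p) p" for n :: nat
    using group_commutes_pow[of x g n] group_commutes_pow[of y h n] g h x(3) y(3)
    by (simp_all add: dist_act_commuting)
qed (use disj letter_power_gromov_seq[OF ax x(1,2)] letter_power_gromov_seq[OF ay y(1,2)] in auto)

definition ping_pong_pair :: "'g \<Rightarrow> 'g \<Rightarrow> real \<Rightarrow> real \<Rightarrow> bool" where
  "ping_pong_pair a b A B \<longleftrightarrow> alphabet {a, inv a, b, inv b} A B \<and> distinct [a, inv a, b, inv b]"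

lemma ping_pong_pair_of_bounds:
  assumes a: "a \<in> carrier G" and b: "b \<in> carrier G"
    and bounds: "gp (\<phi> a p) (\<phi> (inv a) p) p \<le> B" "gp (\<phi> b p) (\<phi> (inv b) p) p \<le> B"
      "gp (\<phi> a p) (\<phi> b p) p \<le> B" "gp (\<phi> a p) (\<phi> (inv b) p) p \<le> B"
      "gp (\<phi> (inv a) p) (\<phi> b p) p \<le> B" "gp (\<phi> (inv a) p) (\<phi> (inv b) p) p \<le> B"
    and B: "0 \<le> B" and far: "2 * B + 3 * \<delta> < dist p (\<phi> a p)" "2 * B + 3 * \<delta> < dist p (\<phi> b p)"
  shows "ping_pong_pair a b (min (dist p (\<phi> a p)) (dist p (\<phi> b p))) B"
proof -
  have far': "B < dist p (\<phi> a p)" "B < dist p (\<phi> (inv a) p)" "B < dist p (\<phi> b p)" "B < dist p (\<phi> (inv b) p)"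
    using far B delta_nonneg dist_act_inv[OF a] dist_act_inv[OF b] by linarith+
  have neq: "u \<noteq> v" if "gp (\<phi> u p) (\<phi> v p) p \<le> B" "B < dist p (\<phi> u p)" for u v
    using that by (auto simp: gromov_prod_self dist_commute)
  have "distinct [a, inv a, b, inv b]"
    using neq[OF bounds(1) far'(1)] neq[OF bounds(2) far'(3)] neq[OF bounds(3) far'(1)]
      neq[OF bounds(4) far'(1)] neq[OF bounds(5) far'(2)] neq[OF bounds(6) far'(2)] by auto
  moreover have "alphabet {a, inv a, b, inv b} (min (dist p (\<phi> a p)) (dist p (\<phi> b p))) B"
    unfolding alphabet_def using a b bounds B far dist_act_inv[OF a] dist_act_inv[OF b]
    by (auto simp: gromov_prod_commute)
  ultimately show ?thesis unfolding ping_pong_pair_def by blast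
qed

text \<open>Common large powers of two letters whose powers diverge form a ping-pong pair: the
  translation lengths grow linearly while all mutual Gromov products stay bounded.\<close>

lemma ping_pong_pair_of_letters:
  assumes ax: "alphabet {x, inv x} Ax Bx" "x \<noteq> inv x" and ay: "alphabet {y, inv y} Ay By" "y \<noteq> inv y"
    and cross: "\<forall>u\<in>{x, inv x}. \<forall>v\<in>{y, inv y}. \<forall>K::nat. gp (\<phi> (u [^] K) p) (\<phi> (v [^] K) p) p \<le> M"
  shows "\<exists>a b A B. ping_pong_pair a b A B"
proof -
  have x: "x \<in> carrier G" and y: "y \<in> carrier G" using ax ay unfolding alphabet_def by auto
  define B where "B = max (max (Bx + 2 * \<delta>) (By + 2 * \<delta>)) M"
  have B0: "B \<ge> 0" unfolding B_def using alphabet_margin[OF ax(1)] delta_nonneg by auto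
  define \<gamma> where "\<gamma> = min (Ax - 2 * Bx - 2 * \<delta>) (Ay - 2 * By - 2 * \<delta>)"
  have "\<gamma> > 0" unfolding \<gamma>_def using alphabet_rate_pos[OF ax(1)] alphabet_rate_pos[OF ay(1)] by simp
  then obtain K :: nat where K: "2 * B + 3 * \<delta> < real K * \<gamma>" using ex_less_of_nat_mult by blast
  then have K1: "K \<ge> 1" using B0 delta_nonneg by (cases K) auto
  have "real K * \<gamma> \<le> real K * (Ax - 2 * Bx - 2 * \<delta>)" "real K * \<gamma> \<le> real K * (Ay - 2 * By - 2 * \<delta>)"
    unfolding \<gamma>_def by (simp_all add: mult_left_mono)
  then have far: "2 * B + 3 * \<delta> < dist p (\<phi> (x [^] K) p)" "2 * B + 3 * \<delta> < dist p (\<phi> (y [^] K) p)"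
    using K letter_power_dist_ge[OF ax(1) _ ax(2), of K] letter_power_dist_ge[OF ay(1) _ ay(2), of K]
    by auto
  have "gp (\<phi> (x [^] K) p) (\<phi> (inv x [^] K) p) p \<le> Bx + 2 * \<delta>"
    by (rule letter_power_gp_inv_power[OF ax(1) _ ax(2) K1, of "dist p (\<phi> x p)"])
       (use x dist_act_inv in auto)
  moreover have "gp (\<phi> (y [^] K) p) (\<phi> (inv y [^] K) p) p \<le> By + 2 * \<delta>"
    by (rule letter_power_gp_inv_power[OF ay(1) _ ay(2) K1, of "dist p (\<phi> y p)"])
       (use y dist_act_inv in auto)
  ultimately have "ping_pong_pair (x [^] K) (y [^] K) (min (dist p (\<phi> (x [^] K) p)) (dist p (\<phi> (y [^] K) p))) B"
    using x y cross far B0 by (intro ping_pong_pair_of_bounds) (auto simp: nat_pow_inv B_def le_max_iff_disj)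
  then show ?thesis by blast
qed

lemma letter_powers_gp_uniformly_bounded:
  assumes disj: "bd_fixed_set \<phi> p g \<inter> bd_fixed_set \<phi> p h = {}" and g: "g \<in> carrier G" and h: "h \<in> carrier G"
    and ax: "alphabet {x, inv x} Ax Bx" "x \<noteq> inv x" "g \<otimes> x = x \<otimes> g"
    and ay: "alphabet {y, inv y} Ay By" "y \<noteq> inv y" "h \<otimes> y = y \<otimes> h"
  shows "\<exists>M. \<forall>u\<in>{x, inv x}. \<forall>v\<in>{y, inv y}. \<forall>K::nat. gp (\<phi> (u [^] K) p) (\<phi> (v [^] K) p) p \<le> M"
proof -
  have xy: "x \<in> carrier G" "y \<in> carrier G" using ax ay unfolding alphabet_def by auto
  have "\<forall>s\<in>{x, inv x} \<times> {y, inv y}. \<exists>M. \<forall>K::nat. gp (\<phi> (fst s [^] K) p) (\<phi> (snd s [^] K) p) p \<le> M"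
  proof
    fix s assume "s \<in> {x, inv x} \<times> {y, inv y}"
    then obtain u v where s: "s = (u, v)" and u: "u \<in> {x, inv x}" and v: "v \<in> {y, inv y}" by auto
    have "g \<otimes> u = u \<otimes> g" "u \<noteq> inv u" using u ax(2,3) g xy m_commute_inv[of g x] by auto
    moreover have "h \<otimes> v = v \<otimes> h" "v \<noteq> inv v" using v ay(2,3) h xy m_commute_inv[of h y] by auto
    ultimately have "\<exists>M. \<forall>K::nat. gp (\<phi> (u [^] K) p) (\<phi> (v [^] K) p) p \<le> M"
      using u v by (intro letter_powers_gp_bounded[OF disj g h ax(1) _ _ _ ay(1)])
    then show "\<exists>M. \<forall>K::nat. gp (\<phi> (fst s [^] K) p) (\<phi> (snd s [^] K) p) p \<le> M" unfolding s by simp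
  qed
  from finite_uniform_upper_bound[OF _ this] obtain M
    where M: "\<forall>s\<in>{x, inv x} \<times> {y, inv y}. \<forall>K::nat. gp (\<phi> (fst s [^] K) p) (\<phi> (snd s [^] K) p) p \<le> M"
    by auto
  show ?thesis
  proof (intro exI[of _ M] ballI allI)
    fix u v and K :: nat
    assume "u \<in> {x, inv x}" "v \<in> {y, inv y}"
    then have "(u, v) \<in> {x, inv x} \<times> {y, inv y}" by blast
    then show "gp (\<phi> (u [^] K) p) (\<phi> (v [^] K) p) p \<le> M" using M by fastforce
  qed
qed

lemma non_elementary_ping_pong_pair:
  assumes "non_elementary G \<phi> p"
  shows "\<exists>a b A B. ping_pong_pair a b A B"
proof -
  obtain g h where g: "g \<in> carrier G" "loxodromic G \<phi> p g" and h: "h \<in> carrier G" "loxodromic G \<phi> p h"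
    and disj: "bd_fixed_set \<phi> p g \<inter> bd_fixed_set \<phi> p h = {}"
    using assms unfolding non_elementary_def by blast
  obtain n :: nat and Ax Bx where ax: "alphabet {g [^] n, inv (g [^] n)} Ax Bx" "g [^] n \<noteq> inv (g [^] n)"
    using loxodromic_letter[OF g(2)] by blast
  obtain m :: nat and Ay By where ay: "alphabet {h [^] m, inv (h [^] m)} Ay By" "h [^] m \<noteq> inv (h [^] m)"
    using loxodromic_letter[OF h(2)] by blast
  have "g \<otimes> g [^] n = g [^] n \<otimes> g" "h \<otimes> h [^] m = h [^] m \<otimes> h"
    using group_commutes_pow[of g g n] group_commutes_pow[of h h m] g h by simp_all
  then obtain M where "\<forall>u\<in>{g [^] n, inv (g [^] n)}. \<forall>v\<in>{h [^] m, inv (h [^] m)}.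
      \<forall>K::nat. gp (\<phi> (u [^] K) p) (\<phi> (v [^] K) p) p \<le> M"
    using letter_powers_gp_uniformly_bounded[OF disj g(1) h(1) ax(1,2) _ ay(1,2)] by blast
  then show ?thesis using ping_pong_pair_of_letters[OF ax ay] by auto
qed

section \<open>Schottky sets\<close>

lemma gromov_prod_act_shift:
  assumes u: "u \<in> carrier G"
  shows "gp (\<phi> u p) (\<phi> u y) p = dist p (\<phi> u p) - gp (\<phi> (inv u) p) y p"
proof -
  have "gp (\<phi> u y) p (\<phi> u p) = gp y (\<phi> (inv u) p) p"
    using gromov_prod_act[of "inv u" "\<phi> u y" p "\<phi> u p"] u by simp
  then show ?thesis
    using gromov_prod_add_swap_base[of "\<phi> u y" "\<phi> u p" p] by (simp add: gromov_prod_commute)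
qed

lemma card_le_one_of_separated:
  assumes fin: "finite P" and sep: "\<forall>s\<in>P. \<forall>t\<in>P. s \<noteq> t \<longrightarrow> gp (f s) (f t) p \<le> B'"
    and close: "\<forall>s\<in>P. gp (f s) z p > B' + \<delta>"
  shows "card P \<le> 1"
proof -
  have "s = t" if st: "s \<in> P" "t \<in> P" for s t
  proof (rule ccontr)
    assume "s \<noteq> t"
    then have "gp (f s) (f t) p \<le> B'" using sep st by blast
    moreover have "min (gp (f s) z p) (gp z (f t) p) > B' + \<delta>"
      using close st by (simp add: gromov_prod_commute)
    ultimately show False using four_point[of "f s" z p "f t"] by linarith
  qed
  then show ?thesis using fin by (simp add: card_le_Suc0_iff_eq)
qed

text \<open>At most one \<open>s\<close> has \<open>s\<inverse> p\<close> close to the direction of \<open>y\<close>; for all other \<open>s\<close> the point \<open>s y\<close>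
  lies in the shadow of \<open>s p\<close>, and at most one such shadow can contain the direction of \<open>x\<close>.\<close>

lemma card_large_gp_le_two:
  fixes \<sigma> :: "'g \<Rightarrow> 'g"
  assumes fin: "finite S" and \<sigma>: "\<forall>s\<in>S. \<sigma> s \<in> carrier G"
    and sep: "\<forall>s\<in>S. \<forall>t\<in>S. s \<noteq> t \<longrightarrow> gp (\<phi> (\<sigma> s) p) (\<phi> (\<sigma> t) p) p \<le> B'"
    and sep_inv: "\<forall>s\<in>S. \<forall>t\<in>S. s \<noteq> t \<longrightarrow> gp (\<phi> (inv (\<sigma> s)) p) (\<phi> (inv (\<sigma> t)) p) p \<le> B'"
    and far: "\<forall>s\<in>S. dist p (\<phi> (\<sigma> s) p) \<ge> C + B' + \<delta> + 1"
    and C: "C \<ge> B' + 2 * \<delta> + 1"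
  shows "card {s\<in>S. C < gp x (\<phi> (\<sigma> s) y) p} \<le> 2"
proof -
  define P1 where "P1 = {s\<in>S. B' + \<delta> < gp (\<phi> (inv (\<sigma> s)) p) y p}"
  define P2 where "P2 = {s\<in>S. C < gp x (\<phi> (\<sigma> s) y) p} - P1"
  have fin12: "finite P1" "finite P2" using fin unfolding P1_def P2_def by auto
  have "card P1 \<le> 1"
  proof (rule card_le_one_of_separated[OF fin12(1), where f = "\<lambda>s. \<phi> (inv (\<sigma> s)) p" and z = y])
    show "\<forall>s\<in>P1. \<forall>t\<in>P1. s \<noteq> t \<longrightarrow> gp (\<phi> (inv (\<sigma> s)) p) (\<phi> (inv (\<sigma> t)) p) p \<le> B'"
      using sep_inv unfolding P1_def by blast
  qed (simp add: P1_def)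
  moreover have close: "gp (\<phi> (\<sigma> s) p) x p > B' + \<delta>" if s: "s \<in> P2" for s
  proof -
    have "gp (\<phi> (\<sigma> s) p) (\<phi> (\<sigma> s) y) p = dist p (\<phi> (\<sigma> s) p) - gp (\<phi> (inv (\<sigma> s)) p) y p"
      using s \<sigma> unfolding P2_def by (intro gromov_prod_act_shift) auto
    moreover have "gp (\<phi> (inv (\<sigma> s)) p) y p \<le> B' + \<delta>" "dist p (\<phi> (\<sigma> s) p) \<ge> C + B' + \<delta> + 1"
      using s far unfolding P1_def P2_def by auto
    ultimately have "gp (\<phi> (\<sigma> s) y) (\<phi> (\<sigma> s) p) p \<ge> C + 1"
      using gromov_prod_commute[of "\<phi> (\<sigma> s) y" "\<phi> (\<sigma> s) p" p] by linarith
    moreover have "gp x (\<phi> (\<sigma> s) y) p > C" using s unfolding P2_def by auto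
    ultimately show ?thesis
      using four_point[of x "\<phi> (\<sigma> s) y" p "\<phi> (\<sigma> s) p"] C gromov_prod_commute[of x "\<phi> (\<sigma> s) p" p]
      by linarith
  qed
  moreover have "card P2 \<le> 1"
  proof (rule card_le_one_of_separated[OF fin12(2), where f = "\<lambda>s. \<phi> (\<sigma> s) p" and z = x])
    show "\<forall>s\<in>P2. \<forall>t\<in>P2. s \<noteq> t \<longrightarrow> gp (\<phi> (\<sigma> s) p) (\<phi> (\<sigma> t) p) p \<le> B'"
      using sep unfolding P2_def by blast
  qed (use close in blast)
  moreover have "card {s\<in>S. C < gp x (\<phi> (\<sigma> s) y) p} \<le> card P1 + card P2"
  proof -
    have "{s\<in>S. C < gp x (\<phi> (\<sigma> s) y) p} \<subseteq> P1 \<union> P2" unfolding P2_def by auto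
    then have "card {s\<in>S. C < gp x (\<phi> (\<sigma> s) y) p} \<le> card (P1 \<union> P2)"
      using fin12 by (intro card_mono) auto
    also have "\<dots> \<le> card P1 + card P2" by (rule card_Un_le)
    finally show ?thesis .
  qed
  ultimately show ?thesis by linarith
qed

lemma schottky_of_separated:
  assumes fin: "finite S" and S: "S \<subseteq> carrier G"
    and sep: "\<forall>s\<in>S. \<forall>t\<in>S. s \<noteq> t \<longrightarrow> gp (\<phi> s p) (\<phi> t p) p \<le> B' \<and> gp (\<phi> (inv s) p) (\<phi> (inv t) p) p \<le> B'"
    and far: "\<forall>s\<in>S. dist p (\<phi> s p) \<ge> C + B' + \<delta> + 1" "\<forall>s\<in>S. dist p (\<phi> s p) \<ge> D"
    and C: "C \<ge> B' + 2 * \<delta> + 1" and \<epsilon>: "\<epsilon> * real (card S) \<ge> 2"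
  shows "schottky G \<phi> p \<epsilon> C D S"
proof -
  have count: "real (card {s\<in>S. gp x (\<phi> (\<sigma> s) y) p \<le> C}) \<ge> (1 - \<epsilon>) * real (card S)"
    if "card {s\<in>S. C < gp x (\<phi> (\<sigma> s) y) p} \<le> 2" for x y and \<sigma> :: "'g \<Rightarrow> 'g"
  proof -
    have "card S = card {s\<in>S. gp x (\<phi> (\<sigma> s) y) p \<le> C} + card {s\<in>S. C < gp x (\<phi> (\<sigma> s) y) p}"
      using fin by (subst card_Un_disjoint[symmetric]) (auto intro: arg_cong[where f = card])
    then show ?thesis using that \<epsilon> by (simp add: algebra_simps)
  qed
  have "card {s\<in>S. C < gp x (\<phi> s y) p} \<le> 2" for x y
    by (rule card_large_gp_le_two[OF fin, where \<sigma> = "\<lambda>s. s" and B' = B']) (use S sep far(1) C in auto)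
  moreover have "card {s\<in>S. C < gp x (\<phi> (inv s) y) p} \<le> 2" for x y
    by (rule card_large_gp_le_two[OF fin, where \<sigma> = "\<lambda>s. inv s" and B' = B'])
       (use S sep far(1) C dist_act_inv in \<open>auto simp: subset_iff\<close>)
  ultimately show ?thesis
    unfolding schottky_def using fin S far(2) count[where \<sigma> = "\<lambda>s. s"] count[where \<sigma> = "\<lambda>s. inv s"] by auto
qed

lemma V_sets_disjoint:
  assumes u: "\<forall>m::nat\<ge>1. gp (\<phi> (u [^] m) p) (\<phi> u p) p \<ge> C"
    and v: "\<forall>m::nat\<ge>1. gp (\<phi> (v [^] m) p) (\<phi> v p) p \<ge> C"
    and sep: "gp (\<phi> u p) (\<phi> v p) p \<le> B'" and C: "C > B' + 3 * \<delta> + 1/4"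
  shows "V_set p C (attr_fix G \<phi> p u) \<inter> V_set p C (attr_fix G \<phi> p v) = {}"
proof (rule ccontr)
  assume "V_set p C (attr_fix G \<phi> p u) \<inter> V_set p C (attr_fix G \<phi> p v) \<noteq> {}"
  then obtain x where "x \<in> V_set p C (attr_fix G \<phi> p u)" "x \<in> V_set p C (attr_fix G \<phi> p v)" by blast
  then have "gp x (\<phi> u p) p \<ge> C - 1/4 - 2 * \<delta>" "gp x (\<phi> v p) p \<ge> C - 1/4 - 2 * \<delta>"
    using V_set_gp_ge[OF _ u] V_set_gp_ge[OF _ v] unfolding attr_fix_def by auto
  then show False
    using four_point[of "\<phi> u p" x p "\<phi> v p"] sep C gromov_prod_commute[of x "\<phi> u p" p] by linarith
qed

lemma schottky_family:
  assumes fin: "finite S" and S: "S \<subseteq> carrier G"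
    and sep: "\<forall>s\<in>S. \<forall>t\<in>S. s \<noteq> t \<longrightarrow> gp (\<phi> s p) (\<phi> t p) p \<le> B' \<and> gp (\<phi> (inv s) p) (\<phi> (inv t) p) p \<le> B'"
    and ray: "\<forall>s\<in>S. gromov_seq p (\<lambda>k. \<phi> (s [^] (k::nat)) p)"
    and ray_prefix: "\<forall>s\<in>S. \<forall>k::nat\<ge>1. gp (\<phi> (s [^] k) p) (\<phi> s p) p \<ge> dist p (\<phi> s p) - c"
    and far: "\<forall>s\<in>S. dist p (\<phi> s p) \<ge> D" "\<forall>s\<in>S. dist p (\<phi> s p) \<ge> 2 * C + c"
    and C: "C = B' + 3 * \<delta> + 1" and nonneg: "B' \<ge> 0" "c \<ge> 0" and \<epsilon>: "\<epsilon> * real (card S) \<ge> 2"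
  shows "schottky G \<phi> p \<epsilon> C D S"
    and "\<forall>s\<in>S. \<forall>t\<in>S. s \<noteq> t \<longrightarrow> V_set p C (attr_fix G \<phi> p s) \<inter> V_set p C (attr_fix G \<phi> p t) = {}"
    and "\<forall>s\<in>S. \<phi> s p \<in> V_set p (C + \<delta>) (attr_fix G \<phi> p s)"
proof -
  have "\<forall>s\<in>S. dist p (\<phi> s p) \<ge> C + B' + \<delta> + 1"
  proof
    fix s assume "s \<in> S"
    then show "dist p (\<phi> s p) \<ge> C + B' + \<delta> + 1" using far(2) C nonneg delta_nonneg by force
  qed
  moreover have "C \<ge> B' + 2 * \<delta> + 1" using C delta_nonneg by simp
  ultimately show "schottky G \<phi> p \<epsilon> C D S" using schottky_of_separated[OF fin S sep _ far(1) _ \<epsilon>] by blast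
  have near: "\<forall>m::nat\<ge>1. gp (\<phi> (s [^] m) p) (\<phi> s p) p \<ge> C + \<delta>" if "s \<in> S" for s
  proof (intro allI impI)
    fix m :: nat assume "m \<ge> 1"
    then have "gp (\<phi> (s [^] m) p) (\<phi> s p) p \<ge> dist p (\<phi> s p) - c" using ray_prefix that by blast
    moreover have "dist p (\<phi> s p) \<ge> 2 * C + c" using far(2) that by blast
    ultimately show "gp (\<phi> (s [^] m) p) (\<phi> s p) p \<ge> C + \<delta>" using C nonneg delta_nonneg by linarith
  qed
  show "\<forall>s\<in>S. \<phi> s p \<in> V_set p (C + \<delta>) (attr_fix G \<phi> p s)"
  proof
    fix s assume s: "s \<in> S"
    have "\<forall>m::nat\<ge>1. gp (\<phi> s p) (\<phi> (s [^] m) p) p \<ge> C + \<delta>"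
      using near[OF s] gromov_prod_commute by metis
    from in_V_set_of_gp_ge[OF ray[rule_format, OF s] this]
    show "\<phi> s p \<in> V_set p (C + \<delta>) (attr_fix G \<phi> p s)" unfolding attr_fix_def .
  qed
  show "\<forall>s\<in>S. \<forall>t\<in>S. s \<noteq> t \<longrightarrow> V_set p C (attr_fix G \<phi> p s) \<inter> V_set p C (attr_fix G \<phi> p t) = {}"
  proof (intro ballI impI)
    fix s t assume st: "s \<in> S" "t \<in> S" "s \<noteq> t"
    have "\<forall>m::nat\<ge>1. gp (\<phi> (u [^] m) p) (\<phi> u p) p \<ge> C" if "u \<in> S" for u
      using near[OF that] delta_nonneg by force
    moreover have "gp (\<phi> s p) (\<phi> t p) p \<le> B'" using sep st by blast
    moreover have "C > B' + 3 * \<delta> + 1/4" using C by simp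
    ultimately show "V_set p C (attr_fix G \<phi> p s) \<inter> V_set p C (attr_fix G \<phi> p t) = {}"
      using st V_sets_disjoint by blast
  qed
qed

text \<open>The Schottky words \<open>(a\<^sup>i b)\<^sup>n\<close>; two of them first differ after \<open>a\<^sup>i\<close>, their inverses
  after \<open>b\<inverse> a\<^sup>-\<^sup>i\<close>, which bounds the mutual Gromov products independently of \<open>n\<close>.\<close>

definition schottky_word :: "'g \<Rightarrow> 'g \<Rightarrow> nat \<Rightarrow> nat \<Rightarrow> 'g list" where
  "schottky_word a b n i = concat (replicate n (replicate i a @ [b]))"

definition schottky_word_inv :: "'g \<Rightarrow> 'g \<Rightarrow> nat \<Rightarrow> nat \<Rightarrow> 'g list" where
  "schottky_word_inv a b n i = concat (replicate n (inv b # replicate i (inv a)))"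

context
  fixes a b A B
  assumes pp: "ping_pong_pair a b A B"
begin

private lemma pp_alphabet: "alphabet {a, inv a, b, inv b} A B"
  and pp_carrier: "a \<in> carrier G" "b \<in> carrier G"
  and pp_distinct: "distinct [a, inv a, b, inv b]"
  using pp unfolding ping_pong_pair_def alphabet_def by auto

private lemma pp_bound: "\<forall>z\<in>{a, inv a, b, inv b}. dist p (\<phi> z p) \<le> max (dist p (\<phi> a p)) (dist p (\<phi> b p))"
  using dist_act_inv pp_carrier by auto

lemma positive_word_reduced:
  assumes "set L \<subseteq> {a, b}"
  shows "reduced {a, inv a, b, inv b} L"
proof (rule reduced_of_no_inverse_pairs)
  have "\<forall>x\<in>{a, b}. \<forall>y\<in>{a, b}. y \<noteq> inv x" using pp_distinct pp_carrier by auto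
  then show "\<forall>x\<in>set L. \<forall>y\<in>set L. y \<noteq> inv x" using assms by blast
qed (use assms in auto)

lemma negative_word_reduced:
  assumes "set L \<subseteq> {inv a, inv b}"
  shows "reduced {a, inv a, b, inv b} L"
proof (rule reduced_of_no_inverse_pairs)
  have "\<forall>x\<in>{inv a, inv b}. \<forall>y\<in>{inv a, inv b}. y \<noteq> inv x" using pp_distinct pp_carrier by auto
  then show "\<forall>x\<in>set L. \<forall>y\<in>set L. y \<noteq> inv x" using assms by blast
qed (use assms in auto)

lemma set_schottky_word: "set (schottky_word a b n i) \<subseteq> {a, b}"
  and set_schottky_word_inv: "set (schottky_word_inv a b n i) \<subseteq> {inv a, inv b}"
  unfolding schottky_word_def schottky_word_inv_def by (auto simp: set_concat_replicate)

lemma word_prod_schottky_word_inv: "word_prod (schottky_word_inv a b n i) = inv (word_prod (schottky_word a b n i))"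
proof -
  have "rev (map (m_inv G) (schottky_word a b n i)) = schottky_word_inv a b n i"
    unfolding schottky_word_def schottky_word_inv_def by (simp add: rev_concat map_concat)
  then show ?thesis
    using word_prod_rev_inv[of "schottky_word a b n i"] set_schottky_word pp_carrier by auto
qed

lemma gp_schottky_words:
  assumes ij: "1 \<le> i" "i < j" and n: "n \<ge> 1"
  shows "gp (\<phi> (word_prod (schottky_word a b n i)) p) (\<phi> (word_prod (schottky_word a b n j)) p) p
    \<le> real i * max (dist p (\<phi> a p)) (dist p (\<phi> b p)) + B + 2 * \<delta>"
proof -
  obtain n' where n': "n = Suc n'" using n by (cases n) auto
  obtain k where k: "j = i + Suc k" using ij(2) less_iff_Suc_add by auto
  define w r1 r2 where "w = replicate i a" and "r1 = concat (replicate n' (replicate i a @ [b]))"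
    and "r2 = replicate k a @ b # concat (replicate n' (replicate j a @ [b]))"
  have e: "schottky_word a b n i = w @ b # r1" "schottky_word a b n j = w @ a # r2"
    unfolding schottky_word_def w_def r1_def r2_def n' k replicate_add by simp_all
  have "gp (\<phi> (word_prod (w @ b # r1)) p) (\<phi> (word_prod (w @ a # r2)) p) p
      \<le> real (length w) * max (dist p (\<phi> a p)) (dist p (\<phi> b p)) + B + 2 * \<delta>"
    using set_schottky_word[of n i] set_schottky_word[of n j] pp_distinct unfolding e
    by (intro gp_diverging_words[OF pp_alphabet pp_bound] positive_word_reduced) auto
  then show ?thesis unfolding e w_def by simp
qed

lemma gp_inv_schottky_words:
  assumes ij: "1 \<le> i" "i < j" and n: "n \<ge> 2"
  shows "gp (\<phi> (inv (word_prod (schottky_word a b n i))) p) (\<phi> (inv (word_prod (schottky_word a b n j))) p) p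
    \<le> real (Suc i) * max (dist p (\<phi> a p)) (dist p (\<phi> b p)) + B + 2 * \<delta>"
proof -
  obtain n' where n': "n = Suc (Suc n')" using n by (metis add_2_eq_Suc le_Suc_ex)
  obtain k where k: "j = i + Suc k" using ij(2) less_iff_Suc_add by auto
  define w r1 r2 where "w = inv b # replicate i (inv a)"
    and "r1 = replicate i (inv a) @ concat (replicate n' (inv b # replicate i (inv a)))"
    and "r2 = replicate k (inv a) @ concat (replicate (Suc n') (inv b # replicate j (inv a)))"
  have e: "schottky_word_inv a b n i = w @ inv b # r1" "schottky_word_inv a b n j = w @ inv a # r2"
    unfolding schottky_word_inv_def w_def r1_def r2_def n' k replicate_add by simp_all
  have "gp (\<phi> (word_prod (w @ inv b # r1)) p) (\<phi> (word_prod (w @ inv a # r2)) p) p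
      \<le> real (length w) * max (dist p (\<phi> a p)) (dist p (\<phi> b p)) + B + 2 * \<delta>"
    using set_schottky_word_inv[of n i] set_schottky_word_inv[of n j] pp_distinct unfolding e
    by (intro gp_diverging_words[OF pp_alphabet pp_bound] negative_word_reduced) auto
  then show ?thesis unfolding word_prod_schottky_word_inv[symmetric] e w_def by simp
qed

lemma schottky_element_ray:
  assumes i: "i \<ge> 1" and n: "n \<ge> 1"
  defines "s \<equiv> word_prod (schottky_word a b n i)"
  shows "s \<in> carrier G" and "loxodromic G \<phi> p s" and "gromov_seq p (\<lambda>k. \<phi> (s [^] (k::nat)) p)"
    and "\<forall>k::nat\<ge>1. gp (\<phi> (s [^] k) p) (\<phi> s p) p \<ge> dist p (\<phi> s p) - (B + 2 * \<delta>)"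
    and "dist p (\<phi> s p) \<ge> real n * (A - 2 * B - 2 * \<delta>)"
proof -
  let ?W = "schottky_word a b n i"
  have ne: "?W \<noteq> []" using n unfolding schottky_word_def by (cases n) auto
  have r: "reduced {a, inv a, b, inv b} (?W @ ?W)"
    using set_schottky_word[of n i] by (intro positive_word_reduced) auto
  show "s \<in> carrier G"
    using pp_carrier set_schottky_word[of n i] unfolding s_def by (intro word_prod_closed) auto
  show "loxodromic G \<phi> p s" unfolding s_def by (rule cyclic_word_loxodromic[OF pp_alphabet r ne])
  show "gromov_seq p (\<lambda>k. \<phi> (s [^] (k::nat)) p)" unfolding s_def by (rule cyclic_power_gromov_seq[OF pp_alphabet r ne])
  show "\<forall>k::nat\<ge>1. gp (\<phi> (s [^] k) p) (\<phi> s p) p \<ge> dist p (\<phi> s p) - (B + 2 * \<delta>)"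
    using cyclic_power_gp_prefix[OF pp_alphabet r ne, of 1] \<open>s \<in> carrier G\<close>
    unfolding s_def by (simp add: gromov_prod_commute)
  have "length ?W \<ge> n" unfolding schottky_word_def by (simp add: length_concat sum_list_replicate)
  then have "real n * (A - 2 * B - 2 * \<delta>) \<le> real (length ?W) * (A - 2 * B - 2 * \<delta>)"
    using alphabet_rate_pos[OF pp_alphabet] by (intro mult_right_mono) auto
  also have "\<dots> \<le> dist p (\<phi> s p)"
    using word_dist_ge[OF pp_alphabet, of ?W "length ?W"] r unfolding s_def word_orbit_length
    by (auto simp: reduced_append)
  finally show "dist p (\<phi> s p) \<ge> real n * (A - 2 * B - 2 * \<delta>)" .
qed

end

lemma schottky_elements_separated:
  assumes pp: "ping_pong_pair a b A B" and n: "n \<ge> 2" and ij: "i \<in> {1..N}" "j \<in> {1..N}" "i \<noteq> j"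
  defines "s \<equiv> \<lambda>i. word_prod (schottky_word a b n i)"
    and "B' \<equiv> real (Suc N) * max (dist p (\<phi> a p)) (dist p (\<phi> b p)) + B + 2 * \<delta>"
  shows "gp (\<phi> (s i) p) (\<phi> (s j) p) p \<le> B' \<and> gp (\<phi> (inv (s i)) p) (\<phi> (inv (s j)) p) p \<le> B'"
proof -
  define R where "R = max (dist p (\<phi> a p)) (dist p (\<phi> b p))"
  have R: "R \<ge> 0" unfolding R_def by (simp add: le_max_iff_disj)
  have ordered: "gp (\<phi> (s i) p) (\<phi> (s j) p) p \<le> B' \<and> gp (\<phi> (inv (s i)) p) (\<phi> (inv (s j)) p) p \<le> B'"
    if "i \<in> {1..N}" "i < j" for i j
  proof -
    have "real i * R \<le> real (Suc N) * R" "real (Suc i) * R \<le> real (Suc N) * R"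
      using that R by (auto intro: mult_right_mono)
    then show ?thesis
      using gp_schottky_words[OF pp, of i j n] gp_inv_schottky_words[OF pp, of i j n] that n
      unfolding s_def B'_def R_def by auto
  qed
  show ?thesis
    using ordered[of i j] ordered[of j i] ij by (cases "i < j") (auto simp: gromov_prod_commute)
qed

definition separated_schottky_set :: "real \<Rightarrow> real \<Rightarrow> real \<Rightarrow> 'g set \<Rightarrow> bool" where
  "separated_schottky_set \<epsilon> C D S \<longleftrightarrow> S \<noteq> {} \<and> schottky G \<phi> p \<epsilon> C D S \<and> (\<forall>s\<in>S. loxodromic G \<phi> p s) \<and>
     (\<forall>s\<in>S. \<forall>t\<in>S. s \<noteq> t \<longrightarrow> V_set p C (attr_fix G \<phi> p s) \<inter> V_set p C (attr_fix G \<phi> p t) = {}) \<and>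
     (\<forall>s\<in>S. \<phi> s p \<in> V_set p (C + \<delta>) (attr_fix G \<phi> p s))"

lemma schottky_words_schottky_set:
  assumes pp: "ping_pong_pair a b A B" and n: "n \<ge> 2" and N: "N \<ge> 1" "\<epsilon> * real N \<ge> 2"
    and B': "B' = real (Suc N) * max (dist p (\<phi> a p)) (dist p (\<phi> b p)) + B + 2 * \<delta>"
    and C: "C = B' + 3 * \<delta> + 1"
    and long: "max D (2 * C + B + 2 * \<delta>) < real n * (A - 2 * B - 2 * \<delta>)"
  defines "S \<equiv> (\<lambda>i. word_prod (schottky_word a b n i)) ` {1..N}"
  shows "separated_schottky_set \<epsilon> C D S"
proof -
  have al: "alphabet {a, inv a, b, inv b} A B" using pp unfolding ping_pong_pair_def by blast
  have nonneg: "B' \<ge> 0" "B + 2 * \<delta> \<ge> 0"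
    using alphabet_margin[OF al] delta_nonneg unfolding B'
    by (auto intro!: add_nonneg_nonneg mult_nonneg_nonneg simp: le_max_iff_disj)
  define s where "s i = word_prod (schottky_word a b n i)" for i
  have "n \<ge> 1" using n by simp
  note ray = schottky_element_ray[OF pp _ this, folded s_def]
  have sep: "gp (\<phi> (s i) p) (\<phi> (s j) p) p \<le> B' \<and> gp (\<phi> (inv (s i)) p) (\<phi> (inv (s j)) p) p \<le> B'"
    if "i \<in> {1..N}" "j \<in> {1..N}" "i \<noteq> j" for i j
    using schottky_elements_separated[OF pp n that] unfolding s_def B' by simp
  have far: "dist p (\<phi> (s i) p) > max D (2 * C + B + 2 * \<delta>)" if "i \<in> {1..N}" for i
    using ray(5)[of i] long that by auto
  have "inj_on s {1..N}"
  proof (rule inj_onI, rule ccontr)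
    fix i j assume ij: "i \<in> {1..N}" "j \<in> {1..N}" "s i = s j" "i \<noteq> j"
    then have "dist p (\<phi> (s i) p) \<le> B'" using sep[OF ij(1,2,4)] by (simp add: gromov_prod_self dist_commute)
    then show False using far[OF ij(1)] nonneg C delta_nonneg by auto
  qed
  then have "\<epsilon> * real (card S) \<ge> 2" "S \<noteq> {}" "finite S"
    using N unfolding S_def s_def[symmetric] by (auto simp: card_image)
  moreover have "\<forall>u\<in>S. \<forall>v\<in>S. u \<noteq> v \<longrightarrow> gp (\<phi> u p) (\<phi> v p) p \<le> B' \<and> gp (\<phi> (inv u) p) (\<phi> (inv v) p) p \<le> B'"
    unfolding S_def s_def[symmetric] using sep by fast
  moreover have "\<forall>u\<in>S. gromov_seq p (\<lambda>k. \<phi> (u [^] (k::nat)) p)"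
    "\<forall>u\<in>S. \<forall>k::nat\<ge>1. gp (\<phi> (u [^] k) p) (\<phi> u p) p \<ge> dist p (\<phi> u p) - (B + 2 * \<delta>)"
    "\<forall>u\<in>S. dist p (\<phi> u p) \<ge> D" "\<forall>u\<in>S. dist p (\<phi> u p) \<ge> 2 * C + (B + 2 * \<delta>)"
    "S \<subseteq> carrier G" "\<forall>u\<in>S. loxodromic G \<phi> p u"
    unfolding S_def s_def[symmetric] using ray far by (fastforce simp: max_less_iff_conj)+
  ultimately show ?thesis
    using schottky_family[of S B' "B + 2 * \<delta>" D C \<epsilon>] nonneg C unfolding separated_schottky_set_def by auto
qed

lemma ping_pong_pair_schottky_sets:
  assumes pp: "ping_pong_pair a b A B" and \<epsilon>: "0 < \<epsilon>"
  shows "\<exists>C. \<forall>D. \<exists>S. separated_schottky_set \<epsilon> C D S"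
proof -
  have rate: "A - 2 * B - 2 * \<delta> > 0"
    using pp alphabet_rate_pos unfolding ping_pong_pair_def by blast
  define N where "N = nat \<lceil>2 / \<epsilon>\<rceil>"
  have "real N \<ge> 2 / \<epsilon>" unfolding N_def by (rule real_nat_ceiling_ge)
  then have N: "\<epsilon> * real N \<ge> 2" using \<epsilon> by (simp add: field_simps)
  then have N1: "N \<ge> 1" by (cases N) auto
  define B' where "B' = real (Suc N) * max (dist p (\<phi> a p)) (dist p (\<phi> b p)) + B + 2 * \<delta>"
  define C where "C = B' + 3 * \<delta> + 1"
  show ?thesis
  proof (intro exI[of _ C] allI)
    fix D :: real
    obtain n0 :: nat where n0: "max D (2 * C + B + 2 * \<delta>) < real n0 * (A - 2 * B - 2 * \<delta>)"
      using ex_less_of_nat_mult[OF rate] by blast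
    have "real n0 * (A - 2 * B - 2 * \<delta>) \<le> real (max n0 2) * (A - 2 * B - 2 * \<delta>)"
      using rate by (intro mult_right_mono) auto
    with n0 show "\<exists>S. separated_schottky_set \<epsilon> C D S"
      using schottky_words_schottky_set[OF pp _ N1 N B'_def C_def, of "max n0 2" D] by fastforce
  qed
qed

end

theorem lemma5p4:
  fixes G :: "('g, 'b) monoid_scheme" and \<phi> :: "'g \<Rightarrow> 'a::metric_space \<Rightarrow> 'a"
    and p :: 'a and \<delta> :: real
  assumes "geodesic_space TYPE('a)"
    and "gromov_hyperbolic TYPE('a) \<delta>"
    and "isometric_action G \<phi>"
    and "non_elementary G \<phi> p"
  shows "\<forall>\<epsilon>::real. 0 < \<epsilon> \<and> \<epsilon> < 1 \<longrightarrow> (\<exists>C::real. \<forall>D::real. \<exists>S.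
           S \<noteq> {} \<and> schottky G \<phi> p \<epsilon> C D S \<and>
           (\<forall>s\<in>S. loxodromic G \<phi> p s) \<and>
           (\<forall>s\<in>S. \<forall>t\<in>S. s \<noteq> t \<longrightarrow> V_set p C (attr_fix G \<phi> p s) \<inter> V_set p C (attr_fix G \<phi> p t) = {}) \<and>
           (\<forall>s\<in>S. \<phi> s p \<in> V_set p (C + \<delta>) (attr_fix G \<phi> p s)))"
proof -
  have "group G" using assms(3) unfolding isometric_action_def by simp
  then interpret hyperbolic_action G \<phi> p \<delta>
    using assms(2,3) by (intro hyperbolic_action.intro hyperbolic_action_axioms.intro)
  obtain a b A B where "ping_pong_pair a b A B" using non_elementary_ping_pong_pair[OF assms(4)] by blast
  then show ?thesis using ping_pong_pair_schottky_sets unfolding separated_schottky_set_def by blast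
qed

end
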